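(* Let $K$ be an algebraically closed field of characteristic zero, let $n\ge 3$, let $R=K[x_1,\dots,x_n]$ and let $S=K[X_1,\dots,X_n]$ be the divided power algebra, viewed as an $R$-module via contraction. Let $1\le r\le n-1$, let $a_1,\dots,a_n\ge 0$ and $b_1,\dots,b_n\ge 1$ be integers with $\sum_{i=1}^r b_i=\sum_{j=r+1}^n b_j>0$, and consider the binomial $$F=X_1^{a_1}X_2^{a_2}\cdots X_n^{a_n}\left(X_1^{b_1}X_2^{b_2}\cdots X_r^{b_r}-X_{r+1}^{b_{r+1}}\cdots X_n^{b_n}\right)\in S.$$ Then $A_F=R/\operatorname{Ann}_R(F)$ is a complete intersection if and only if, after changing coordinates (relabeling the variables and, if necessary, interchanging the roles of the two monomial factors, i.e. replacing $F$ by $-F$, which does not change $\operatorname{Ann}_R(F)$), we have $r=n-1$ and there exists an integer $1\le i\le n-1$ such that $a_i<q\,b_i$, where $q=\left\lfloor \frac{a_n+1}{b_n}\right\rfloor$. Moreover, in this case, setting $m=\min\left\{\left\lfloor \frac{a_j}{b_j}\right\rfloor \mid 1\le j\le n-1\right\}+1$, we have $$\operatorname{Ann}_R(F)=\left(x_1^{a_1+b_1+1},x_2^{a_2+b_2+1},\dots,x_{n-1}^{a_{n-1}+b_{n-1}+1},\,G\right),\qquad G=x_n^{a_n+1}+\sum_{j=1}^m\left(x_1^{b_1}\cdots x_{n-1}^{b_{n-1}}\right)^{j}x_n^{a_n+1-jb_n}.$$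
   Context: The divided power algebra $S=K[X_1,\dots,X_n]$ is an $R$-module via the contraction action $x_i\circ X_j^k=\delta_{ij}X_j^{k-1}$ if $k>0$ and $0$ otherwise (extended multiplicatively and linearly), with $\deg X_i=\deg x_i=1$. For a homogeneous $F\in S$, $\operatorname{Ann}_R(F)=\{f\in R\mid f\circ F=0\}$, and $A_F=R/\operatorname{Ann}_R(F)$ is the associated Artinian Gorenstein graded $K$-algebra ($F$ is its Macaulay dual generator). $A_F$ is a complete intersection if $\operatorname{Ann}_R(F)$ is generated by a regular sequence (equivalently, by $n$ elements). *)

theory Defs
  imports "HOL-Library.Poly_Mapping" "HOL-Computational_Algebra.Polynomial"
begin

text \<open>Variables x_1..x_n (resp. X_1..X_n) are the indices 1..n.
  The same carrier type is used for R (with its usual ring structure) and, as a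
  K-vector space with basis the divided-power monomials X^[alpha], for S.\<close>

type_synonym 'k mpoly = "(nat \<Rightarrow>\<^sub>0 nat) \<Rightarrow>\<^sub>0 'k"

definition in_vars :: "nat \<Rightarrow> ('k::zero) mpoly \<Rightarrow> bool" where
  "in_vars n p \<longleftrightarrow> (\<forall>mm::nat \<Rightarrow>\<^sub>0 nat. mm \<in> Poly_Mapping.keys p \<longrightarrow> Poly_Mapping.keys mm \<subseteq> {1..n})"

definition contract :: "('k::comm_ring_1) mpoly \<Rightarrow> 'k mpoly \<Rightarrow> 'k mpoly" where
  "contract f F =
     (\<Sum>\<alpha>\<in>Poly_Mapping.keys f. \<Sum>\<beta>\<in>Poly_Mapping.keys F.
        if (\<forall>i. Poly_Mapping.lookup \<alpha> i \<le> Poly_Mapping.lookup \<beta> i)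
        then Poly_Mapping.single (\<beta> - \<alpha>) (Poly_Mapping.lookup f \<alpha> * Poly_Mapping.lookup F \<beta>) else 0)"

definition Ann :: "nat \<Rightarrow> ('k::comm_ring_1) mpoly \<Rightarrow> 'k mpoly set" where
  "Ann n F = {f. in_vars n f \<and> contract f F = 0}"

definition ideal_gen :: "nat \<Rightarrow> ('k::comm_ring_1) mpoly list \<Rightarrow> 'k mpoly set" where
  "ideal_gen n gs = {(\<Sum>i<length gs. h i * gs ! i) | h. \<forall>i. in_vars n (h i)}"

text \<open>A_F is a complete intersection: Ann_R(F) is generated by n elements of R.\<close>
definition is_CI :: "nat \<Rightarrow> ('k::comm_ring_1) mpoly \<Rightarrow> bool" where
  "is_CI n F \<longleftrightarrow> (\<exists>gs. length gs = n \<and> (\<forall>g\<in>set gs. in_vars n g) \<and> Ann n F = ideal_gen n gs)"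

definition expv :: "nat set \<Rightarrow> (nat \<Rightarrow> nat) \<Rightarrow> (nat \<Rightarrow>\<^sub>0 nat)" where
  "expv I e = (\<Sum>i\<in>I. Poly_Mapping.single i (e i))"

definition mon :: "(nat \<Rightarrow>\<^sub>0 nat) \<Rightarrow> ('k::comm_ring_1) mpoly" where
  "mon \<alpha> = Poly_Mapping.single \<alpha> 1"

definition xpow :: "nat \<Rightarrow> nat \<Rightarrow> ('k::comm_ring_1) mpoly" where
  "xpow i e = mon (Poly_Mapping.single i e)"

definition binomF :: "nat \<Rightarrow> nat \<Rightarrow> (nat \<Rightarrow> nat) \<Rightarrow> (nat \<Rightarrow> nat) \<Rightarrow> ('k::comm_ring_1) mpoly" where
  "binomF n r a b = mon (expv {1..n} a + expv {1..r} b) - mon (expv {1..n} a + expv {r+1..n} b)"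

definition alg_closed :: "'k::field itself \<Rightarrow> bool" where
  "alg_closed _ \<longleftrightarrow> (\<forall>p::'k poly. degree p > 0 \<longrightarrow> (\<exists>x. poly p x = 0))"

end

theory Submission
  imports Defs "Jordan_Normal_Form.Determinant"
begin

text \<open>Write \<open>F = X^A - X^B\<close>. Contracting with \<open>F\<close> shows that \<open>h \<in> Ann(F)\<close> iff its coefficients
  satisfy \<open>h_\<mu> = h_(B - (A - \<mu>))\<close> for \<open>\<mu> \<le> A\<close> with \<open>A - \<mu> \<le> B\<close>, \<open>h_\<mu> = 0\<close> for the other
  \<open>\<mu> \<le> A\<close>, and symmetrically with \<open>A\<close> and \<open>B\<close> exchanged. So \<open>Ann(F)\<close> contains the monomials
  outside both boxes below \<open>A\<close> and \<open>B\<close>, and the sums of monomials along chains of the shift by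
  \<open>B - A\<close> that start outside the box below \<open>A\<close> and end outside the box below \<open>B\<close>.

  If one side is a pure power, \<open>F = X^a (\<Prod>k\<noteq>s. X_k^b_k - X_s^b_s)\<close>, this gives the pure powers
  \<open>x_k^(a_k + b_k + 1)\<close>, \<open>k \<noteq> s\<close>, and the chain \<open>G\<close> through \<open>x_s^(a_s + 1)\<close> of length \<open>m + 1\<close>;
  the chain only fits when \<open>m b_s \<le> a_s + 1\<close>, i.e. when \<open>a_i < q b_i\<close> for some \<open>i\<close>. Modulo these
  \<open>n\<close> elements every polynomial reduces into the box below \<open>A\<close>, where the only element of
  \<open>Ann(F)\<close> is \<open>0\<close>; so \<open>A_F\<close> is a complete intersection.

  Otherwise, and whenever both sides involve at least two variables, there are more than \<open>n\<close>
  elements of \<open>Ann(F)\<close> together with a dual family of coefficient functionals that vanish on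
  \<open>\<frakm> Ann(F)\<close>; hence \<open>Ann(F)\<close> needs more than \<open>n\<close> generators.\<close>

text \<open>\<open>Group.mon\<close>, imported through \<open>Jordan_Normal_Form\<close>, would shadow \<open>mon\<close> of \<open>Defs\<close>.\<close>

hide_const (open) Group.mon
alias lookup = Poly_Mapping.lookup
alias keys = Poly_Mapping.keys

section \<open>Exponents and monomials\<close>

definition pw_le :: "(nat \<Rightarrow>\<^sub>0 nat) \<Rightarrow> (nat \<Rightarrow>\<^sub>0 nat) \<Rightarrow> bool" (infix "\<preceq>" 50) where
  "\<alpha> \<preceq> \<beta> \<longleftrightarrow> (\<forall>i. lookup \<alpha> i \<le> lookup \<beta> i)"

lemma zero_pw_le [simp]: "0 \<preceq> \<alpha>"
  by (simp add: pw_le_def)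

lemma add_eq_iff_pw_le: "\<beta> = \<alpha> + \<gamma> \<longleftrightarrow> \<alpha> \<preceq> \<beta> \<and> \<gamma> = \<beta> - \<alpha>"
  by (auto simp: pw_le_def poly_mapping_eq_iff fun_eq_iff lookup_add lookup_minus)

lemma pw_le_add_diff: "\<gamma> \<preceq> \<alpha> \<Longrightarrow> \<gamma> + (\<alpha> - \<gamma>) = \<alpha>"
  using add_eq_iff_pw_le by metis

lemma diff_diff_pw_le: "\<mu> \<preceq> \<alpha> \<Longrightarrow> \<alpha> - (\<alpha> - \<mu>) = \<mu>"
  by (auto simp: pw_le_def poly_mapping_eq_iff fun_eq_iff lookup_minus)

lemma diff_pw_le: "\<alpha> - \<mu> \<preceq> \<alpha>"
  by (auto simp: pw_le_def lookup_minus)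

lemma keys_add_nat: "keys ((\<alpha> :: nat \<Rightarrow>\<^sub>0 nat) + \<beta>) = keys \<alpha> \<union> keys \<beta>"
  by (auto simp: in_keys_iff lookup_add)

lemma keys_diff_subset_nat: "keys ((\<alpha> :: nat \<Rightarrow>\<^sub>0 nat) - \<beta>) \<subseteq> keys \<alpha>"
  by (auto simp: in_keys_iff lookup_minus)

lemma lookup_minus_single:
  "lookup (\<alpha> - Poly_Mapping.single j c) x = lookup \<alpha> x - (if x = j then c else 0 :: nat)"
  by (simp add: lookup_minus lookup_single when_def)

lemma poly_mapping_sum_single: "f = (\<Sum>k\<in>keys f. Poly_Mapping.single k (lookup f k))"
  by (rule poly_mapping_eqI) (simp add: lookup_sum lookup_single when_def sum.delta in_keys_iff)

lemma lookup_single_mult: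
  "lookup (Poly_Mapping.single \<beta> c * g) \<alpha> = (if \<beta> \<preceq> \<alpha> then c * lookup g (\<alpha> - \<beta>) else 0)"
proof -
  have "(\<lambda>\<gamma>. lookup g \<gamma> when \<alpha> = \<beta> + \<gamma>) =
      (\<lambda>\<gamma>. (if \<beta> \<preceq> \<alpha> then lookup g \<gamma> else 0) when \<gamma> = \<alpha> - \<beta>)"
    using add_eq_iff_pw_le by (auto simp: when_def fun_eq_iff)
  then have "Sum_any (\<lambda>\<gamma>. lookup g \<gamma> when \<alpha> = \<beta> + \<gamma>) =
      (if \<beta> \<preceq> \<alpha> then lookup g (\<alpha> - \<beta>) else 0)"
    by (simp only:) simp
  then show ?thesis
    by (simp add: lookup_mult lookup_single when_mult)
qed

lemma lookup_mon: "lookup (mon \<alpha>) \<beta> = (if \<beta> = \<alpha> then 1 else 0)"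
  by (simp add: Defs.mon_def lookup_single when_def)

lemma mon_mult: "mon \<alpha> * mon \<beta> = (mon (\<alpha> + \<beta>) :: 'k::comm_ring_1 mpoly)"
  by (simp add: Defs.mon_def mult_single)

lemma lookup_sum_mon:
  assumes "inj_on m J" "finite J"
  shows "lookup (\<Sum>j\<in>J. mon (m j) :: 'k::comm_ring_1 mpoly) \<mu> = (if \<mu> \<in> m ` J then 1 else 0)"
proof -
  have "(\<Sum>j\<in>J. mon (m j) :: 'k mpoly) = (\<Sum>\<nu>\<in>m ` J. mon \<nu>)"
    using assms by (simp add: sum.reindex)
  then show ?thesis
    using assms by (simp add: lookup_sum lookup_mon sum.delta)
qed

lemma lookup_expv: "finite I \<Longrightarrow> lookup (expv I e) x = (if x \<in> I then e x else 0)"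
  unfolding expv_def by (simp add: lookup_sum lookup_single when_def sum.delta')

lemma prod_xpow: "finite I \<Longrightarrow> (\<Prod>i\<in>I. xpow i (e i)) = (mon (expv I e) :: 'k::comm_ring_1 mpoly)"
  by (induction I rule: finite_induct) (simp_all add: expv_def xpow_def Defs.mon_def mult_single)

lemma mon_expv_power: "(mon (expv I e) :: 'k::comm_ring_1 mpoly) ^ j = mon (expv I (\<lambda>k. j * e k))"
  by (induction j) (simp_all add: expv_def Defs.mon_def mult_single single_add sum.distrib)

lemma single_eq_single_iff:
  "Poly_Mapping.single k v = Poly_Mapping.single k' v' \<longleftrightarrow> k = k' \<and> v = v' \<or> v = 0 \<and> v' = 0"
  by (metis lookup_single_eq lookup_single_not_eq single_zero)

section \<open>Contraction and annihilators\<close>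

lemma lookup_contract:
  "lookup (contract f F) \<gamma> = (\<Sum>\<alpha>\<in>keys f. lookup f \<alpha> * lookup F (\<alpha> + \<gamma>))"
proof -
  have "(\<Sum>\<beta>\<in>keys F. lookup (if \<forall>i. lookup \<alpha> i \<le> lookup \<beta> i
          then Poly_Mapping.single (\<beta> - \<alpha>) (lookup f \<alpha> * lookup F \<beta>) else 0) \<gamma>)
      = (\<Sum>\<beta>\<in>keys F. if \<beta> = \<alpha> + \<gamma> then lookup f \<alpha> * lookup F \<beta> else 0)" for \<alpha>
    using add_eq_iff_pw_le[of _ \<alpha> \<gamma>]
    by (intro sum.cong) (auto simp: lookup_single pw_le_def when_def)
  also have "\<dots> \<alpha> = lookup f \<alpha> * lookup F (\<alpha> + \<gamma>)" for \<alpha>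
    by (simp add: sum.delta in_keys_iff)
  finally show ?thesis
    unfolding contract_def by (simp add: lookup_sum)
qed

lemma lookup_contract_superset:
  assumes "finite S" "keys f \<subseteq> S"
  shows "lookup (contract f F) \<gamma> = (\<Sum>\<alpha>\<in>S. lookup f \<alpha> * lookup F (\<alpha> + \<gamma>))"
  unfolding lookup_contract
  by (rule sum.mono_neutral_left) (use assms in \<open>auto simp: in_keys_iff\<close>)

lemma contract_zero [simp]: "contract 0 F = 0"
  by (simp add: contract_def)

lemma contract_add: "contract (f + g) F = contract f F + contract g F"
proof (rule poly_mapping_eqI)
  fix \<gamma>
  let ?S = "keys f \<union> keys g"
  have "keys (f + g) \<subseteq> ?S" "keys f \<subseteq> ?S" "keys g \<subseteq> ?S"
    using keys_add[of f g] by auto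
  then show "lookup (contract (f + g) F) \<gamma> = lookup (contract f F + contract g F) \<gamma>"
    by (simp add: lookup_add lookup_contract_superset[of ?S] distrib_right sum.distrib)
qed

lemma contract_uminus: "contract (- f) F = - contract f F"
  by (rule poly_mapping_eqI) (simp add: lookup_contract sum_negf)

lemma contract_sum: "contract (\<Sum>i\<in>I. f i) F = (\<Sum>i\<in>I. contract (f i) F)"
  by (induction I rule: infinite_finite_induct) (auto simp: contract_add)

lemma contract_diff_right: "contract f (F - G) = contract f F - contract f G"
  by (rule poly_mapping_eqI) (simp add: lookup_contract lookup_minus right_diff_distrib sum_subtractf)

lemma contract_uminus_right: "contract f (- F) = - contract f F"
  by (rule poly_mapping_eqI) (simp add: lookup_contract sum_negf)

lemma lookup_contract_single_mult:
  "lookup (contract (Poly_Mapping.single \<beta> c * g) F) \<gamma> = c * lookup (contract g F) (\<beta> + \<gamma>)"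
proof -
  have keys: "keys (Poly_Mapping.single \<beta> c * g) \<subseteq> (+) \<beta> ` keys g"
    using keys_mult[of "Poly_Mapping.single \<beta> c" g] by (auto split: if_splits)
  have "lookup (contract (Poly_Mapping.single \<beta> c * g) F) \<gamma>
      = (\<Sum>\<alpha>\<in>(+) \<beta> ` keys g. lookup (Poly_Mapping.single \<beta> c * g) \<alpha> * lookup F (\<alpha> + \<gamma>))"
    using keys by (intro lookup_contract_superset) auto
  also have "\<dots> = (\<Sum>\<alpha>\<in>keys g. lookup (Poly_Mapping.single \<beta> c * g) (\<beta> + \<alpha>) * lookup F (\<beta> + \<alpha> + \<gamma>))"
    by (subst sum.reindex) (auto intro: inj_onI)
  also have "\<dots> = (\<Sum>\<alpha>\<in>keys g. c * (lookup g \<alpha> * lookup F (\<beta> + \<alpha> + \<gamma>)))"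
    by (intro sum.cong refl) (simp add: lookup_single_mult pw_le_def lookup_add mult.assoc)
  also have "\<dots> = c * lookup (contract g F) (\<beta> + \<gamma>)"
    by (simp add: lookup_contract sum_distrib_left add_ac)
  finally show ?thesis .
qed

lemma lookup_contract_mult:
  "lookup (contract (H * g) F) \<gamma> = (\<Sum>\<beta>\<in>keys H. lookup H \<beta> * lookup (contract g F) (\<beta> + \<gamma>))"
proof -
  have "H * g = (\<Sum>\<beta>\<in>keys H. Poly_Mapping.single \<beta> (lookup H \<beta>) * g)"
    by (subst poly_mapping_sum_single[of H]) (simp add: sum_distrib_right)
  then show ?thesis
    by (simp add: contract_sum lookup_sum lookup_contract_single_mult)
qed

lemma lookup_contract_mon:
  "lookup (contract f (mon \<alpha>)) \<gamma> = (if \<gamma> \<preceq> \<alpha> then lookup f (\<alpha> - \<gamma>) else 0)"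
proof -
  have "lookup (contract f (mon \<alpha>)) \<gamma>
      = (\<Sum>\<beta>\<in>keys f. if \<beta> = \<alpha> - \<gamma> \<and> \<gamma> \<preceq> \<alpha> then lookup f \<beta> else 0)"
    unfolding lookup_contract using add_eq_iff_pw_le[of \<alpha> \<gamma>]
    by (intro sum.cong) (auto simp: lookup_mon add.commute pw_le_add_diff)
  then show ?thesis
    by (auto simp: sum.delta' in_keys_iff)
qed

lemma in_vars_0 [simp]: "in_vars n 0"
  by (simp add: in_vars_def)

lemma in_vars_1 [simp]: "in_vars n 1"
  by (auto simp: in_vars_def in_keys_iff lookup_one when_def)

lemma in_vars_add: "in_vars n f \<Longrightarrow> in_vars n g \<Longrightarrow> in_vars n (f + g)"
  unfolding in_vars_def using keys_add[of f g] by blast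

lemma in_vars_uminus: "in_vars n (f :: 'k::ab_group_add mpoly) \<Longrightarrow> in_vars n (- f)"
  by (simp add: in_vars_def)

lemma in_vars_single: "keys \<alpha> \<subseteq> {1..n} \<Longrightarrow> in_vars n (Poly_Mapping.single \<alpha> c)"
  by (simp add: in_vars_def)

lemma in_vars_mon: "keys \<alpha> \<subseteq> {1..n} \<Longrightarrow> in_vars n (mon \<alpha>)"
  unfolding Defs.mon_def by (rule in_vars_single)

lemma in_vars_mult: "in_vars n f \<Longrightarrow> in_vars n g \<Longrightarrow> in_vars n (f * g)"
  unfolding in_vars_def using keys_mult[of f g] by (fastforce simp: keys_add_nat)

lemma in_vars_sum: "(\<And>i. i \<in> I \<Longrightarrow> in_vars n (f i)) \<Longrightarrow> in_vars n (\<Sum>i\<in>I. f i)"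
  by (induction I rule: infinite_finite_induct) (auto intro: in_vars_add)

lemma Ann_iff: "f \<in> Ann n F \<longleftrightarrow> in_vars n f \<and> (\<forall>\<gamma>. lookup (contract f F) \<gamma> = 0)"
  by (auto simp: Ann_def poly_mapping_eq_iff fun_eq_iff)

lemma Ann_add: "f \<in> Ann n F \<Longrightarrow> g \<in> Ann n F \<Longrightarrow> f + g \<in> Ann n F"
  by (simp add: Ann_def contract_add in_vars_add)

lemma Ann_uminus: "f \<in> Ann n F \<Longrightarrow> - f \<in> Ann n F"
  by (simp add: Ann_def contract_uminus in_vars_uminus)

lemma Ann_diff: "f \<in> Ann n F \<Longrightarrow> g \<in> Ann n F \<Longrightarrow> f - g \<in> Ann n F"
  by (metis Ann_add Ann_uminus diff_conv_add_uminus)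

lemma Ann_sum: "(\<And>i. i \<in> I \<Longrightarrow> f i \<in> Ann n F) \<Longrightarrow> (\<Sum>i\<in>I. f i) \<in> Ann n F"
  by (simp add: Ann_def contract_sum in_vars_sum)

lemma Ann_mult: "in_vars n H \<Longrightarrow> g \<in> Ann n F \<Longrightarrow> H * g \<in> Ann n F"
  by (simp add: Ann_iff lookup_contract_mult in_vars_mult)

lemma Ann_uminus_right: "Ann n (- F) = Ann n F"
  by (simp add: Ann_def contract_uminus_right)

lemma ideal_gen_0: "0 \<in> ideal_gen n gs"
  unfolding ideal_gen_def by (auto intro!: exI[of _ "\<lambda>_. 0"])

lemma ideal_gen_add:
  fixes gs :: "'k::comm_ring_1 mpoly list"
  shows "f \<in> ideal_gen n gs \<Longrightarrow> g \<in> ideal_gen n gs \<Longrightarrow> f + g \<in> ideal_gen n gs"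
  unfolding ideal_gen_def
proof clarify
  fix h1 h2 :: "nat \<Rightarrow> 'k mpoly"
  assume "\<forall>i. in_vars n (h1 i)" "\<forall>i. in_vars n (h2 i)"
  then show "\<exists>h. (\<Sum>i<length gs. h1 i * gs ! i) + (\<Sum>i<length gs. h2 i * gs ! i)
      = (\<Sum>i<length gs. h i * gs ! i) \<and> (\<forall>i. in_vars n (h i))"
    by (intro exI[of _ "\<lambda>i. h1 i + h2 i"]) (simp add: in_vars_add distrib_right sum.distrib)
qed

lemma ideal_gen_mult:
  fixes gs :: "'k::comm_ring_1 mpoly list"
  shows "in_vars n H \<Longrightarrow> f \<in> ideal_gen n gs \<Longrightarrow> H * f \<in> ideal_gen n gs"
  unfolding ideal_gen_def
proof clarify
  fix h :: "nat \<Rightarrow> 'k mpoly"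
  assume "in_vars n H" "\<forall>i. in_vars n (h i)"
  then show "\<exists>h'. H * (\<Sum>i<length gs. h i * gs ! i)
      = (\<Sum>i<length gs. h' i * gs ! i) \<and> (\<forall>i. in_vars n (h' i))"
    by (intro exI[of _ "\<lambda>i. H * h i"]) (simp add: in_vars_mult sum_distrib_left mult.assoc)
qed

lemma ideal_gen_member:
  assumes "g \<in> set gs"
  shows "g \<in> ideal_gen n (gs :: 'k::comm_ring_1 mpoly list)"
proof -
  obtain i where i: "i < length gs" "g = gs ! i"
    using assms by (auto simp: in_set_conv_nth)
  moreover have "(\<Sum>j<length gs. (if j = i then 1 else 0) * gs ! j) = (\<Sum>j<length gs. if j = i then gs ! j else 0)"
    by (rule sum.cong) auto
  ultimately have "g = (\<Sum>j<length gs. (if j = i then 1 else 0) * gs ! j)"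
    by (simp add: sum.delta)
  then show ?thesis
    unfolding ideal_gen_def by (intro CollectI exI[of _ "\<lambda>j. if j = i then 1 else 0"]) simp
qed

lemma mon_in_ideal_gen_if_pw_le:
  fixes gs :: "'k::comm_ring_1 mpoly list"
  assumes "\<beta> \<preceq> \<alpha>" "keys \<alpha> \<subseteq> {1..n}" "mon \<beta> \<in> ideal_gen n gs"
  shows "mon \<alpha> \<in> ideal_gen n gs"
proof -
  have "mon \<alpha> = mon (\<alpha> - \<beta>) * (mon \<beta> :: 'k mpoly)"
    using pw_le_add_diff[OF assms(1)] by (simp add: mon_mult add.commute)
  moreover have "keys (\<alpha> - \<beta>) \<subseteq> {1..n}"
    using assms(2) keys_diff_subset_nat by blast
  ultimately show ?thesis
    using assms(3) by (simp add: ideal_gen_mult in_vars_mon)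
qed

lemma ideal_gen_subset_Ann:
  assumes "set gs \<subseteq> Ann n F"
  shows "ideal_gen n gs \<subseteq> Ann n F"
proof
  fix f
  assume "f \<in> ideal_gen n gs"
  then obtain h where f: "f = (\<Sum>i<length gs. h i * gs ! i)" and h: "\<forall>i. in_vars n (h i)"
    unfolding ideal_gen_def by blast
  have "h i * gs ! i \<in> Ann n F" if "i < length gs" for i
    using assms that h by (intro Ann_mult) auto
  then show "f \<in> Ann n F"
    unfolding f by (intro Ann_sum) auto
qed

lemma is_CI_if_Ann_eq_ideal_gen:
  assumes "Ann n F = ideal_gen n gs" "length gs = n"
  shows "is_CI n (F :: 'k::comm_ring_1 mpoly)"
  unfolding is_CI_def
proof (intro exI conjI ballI)
  fix g
  assume "g \<in> set gs"
  then have "g \<in> Ann n F"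
    using assms(1) ideal_gen_member by blast
  then show "in_vars n g"
    by (simp add: Ann_def)
qed (use assms in auto)

lemma is_CI_uminus: "is_CI n (- F) = is_CI n F"
  by (simp add: is_CI_def Ann_uminus_right)

section \<open>Annihilators of binomials\<close>

lemma lookup_contract_binom:
  "lookup (contract f (mon A - mon B)) \<gamma> =
     (if \<gamma> \<preceq> A then lookup f (A - \<gamma>) else 0) - (if \<gamma> \<preceq> B then lookup f (B - \<gamma>) else 0)"
  by (simp add: contract_diff_right lookup_minus lookup_contract_mon)

lemma Ann_binom_swap: "Ann n (mon A - mon B) = Ann n (mon B - mon A)"
  by (metis Ann_uminus_right minus_diff_eq)

lemma lookup_Ann_binom:
  assumes "h \<in> Ann n (mon A - mon B)" "\<mu> \<preceq> A"
  shows "lookup h \<mu> = (if A - \<mu> \<preceq> B then lookup h (B - (A - \<mu>)) else 0)"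
proof -
  have "lookup (contract h (mon A - mon B)) (A - \<mu>) = 0"
    using assms(1) by (simp add: Ann_iff)
  then show ?thesis
    using assms(2) by (simp add: lookup_contract_binom diff_diff_pw_le diff_pw_le split: if_splits)
qed

lemma lookup_Ann_binom_eq_0:
  assumes "h \<in> Ann n (mon A - mon B)" "\<mu> \<preceq> A" "\<not> A - \<mu> \<preceq> B"
  shows "lookup h \<mu> = 0"
  using lookup_Ann_binom[OF assms(1,2)] assms(3) by simp

lemma lookup_Ann_binom_eq_0':
  assumes "h \<in> Ann n (mon A - mon B)" "\<mu> \<preceq> B" "\<not> B - \<mu> \<preceq> A"
  shows "lookup h \<mu> = 0"
  using assms Ann_binom_swap lookup_Ann_binom_eq_0 by blast

lemma mon_in_Ann_binom:
  assumes "keys p \<subseteq> {1..n}" "\<not> p \<preceq> A" "\<not> p \<preceq> B"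
  shows "mon p \<in> Ann n (mon A - mon B)"
proof -
  have "A - \<gamma> \<noteq> p" "B - \<gamma> \<noteq> p" for \<gamma>
    using diff_pw_le[of A \<gamma>] diff_pw_le[of B \<gamma>] assms by auto
  then show ?thesis
    using assms by (auto simp: Ann_iff lookup_contract_binom lookup_mon in_vars_mon)
qed

text \<open>In the contraction with \<open>F\<close> the terms of consecutive monomials of the chain cancel.\<close>

lemma sum_mon_chain_in_Ann_binom:
  fixes m :: "nat \<Rightarrow> nat \<Rightarrow>\<^sub>0 nat"
  assumes inj: "inj_on m {0..N}" and keys: "\<And>j. j \<le> N \<Longrightarrow> keys (m j) \<subseteq> {1..n}"
    and link: "\<And>j. j \<in> {1..N} \<Longrightarrow> m j \<preceq> A \<and> m (j - 1) \<preceq> B \<and> A - m j = B - m (j - 1)"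
    and start: "\<not> m 0 \<preceq> A" and stop: "\<not> m N \<preceq> B"
  shows "(\<Sum>j=0..N. mon (m j) :: 'k::comm_ring_1 mpoly) \<in> Ann n (mon A - mon B)"
proof -
  let ?S = "m ` {0..N}"
  have coeff: "lookup (\<Sum>j=0..N. mon (m j) :: 'k mpoly) \<mu> = (if \<mu> \<in> ?S then 1 else 0)" for \<mu>
    by (rule lookup_sum_mon[OF inj]) simp
  have "(\<gamma> \<preceq> A \<and> A - \<gamma> \<in> ?S) \<longleftrightarrow> (\<gamma> \<preceq> B \<and> B - \<gamma> \<in> ?S)" for \<gamma>
  proof
    assume "\<gamma> \<preceq> A \<and> A - \<gamma> \<in> ?S"
    then obtain j where j: "j \<le> N" "A - \<gamma> = m j" and \<gamma>: "\<gamma> \<preceq> A"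
      by auto
    have "j \<in> {1..N}"
      using diff_pw_le[of A \<gamma>] j start by (cases j) auto
    then have "\<gamma> = B - m (j - 1)" "B - \<gamma> = m (j - 1)"
      using link diff_diff_pw_le[OF \<gamma>] j by (auto simp: diff_diff_pw_le)
    then show "\<gamma> \<preceq> B \<and> B - \<gamma> \<in> ?S"
      using diff_pw_le[of B] j by auto
  next
    assume "\<gamma> \<preceq> B \<and> B - \<gamma> \<in> ?S"
    then obtain j where j: "j \<le> N" "B - \<gamma> = m j" and \<gamma>: "\<gamma> \<preceq> B"
      by auto
    have "Suc j \<in> {1..N}"
      using diff_pw_le[of B \<gamma>] j stop by (cases "j = N") auto
    then have "\<gamma> = A - m (Suc j)"
      using link[of "Suc j"] diff_diff_pw_le[OF \<gamma>] j by auto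
    moreover from this have "A - \<gamma> = m (Suc j)"
      using link[of "Suc j"] \<open>Suc j \<in> {1..N}\<close> by (metis diff_diff_pw_le)
    ultimately show "\<gamma> \<preceq> A \<and> A - \<gamma> \<in> ?S"
      using diff_pw_le[of A] \<open>Suc j \<in> {1..N}\<close> by auto
  qed
  moreover have "in_vars n (\<Sum>j=0..N. mon (m j) :: 'k mpoly)"
    using keys by (intro in_vars_sum in_vars_mon) auto
  ultimately show ?thesis
    unfolding Ann_iff lookup_contract_binom coeff by auto
qed

text \<open>By \<open>lookup_Ann_binom\<close> the coefficients of \<open>h\<close> are constant along the shift
  \<open>\<mu> \<mapsto> B - (A - \<mu>)\<close> until it leaves the box below \<open>A\<close>; the measure \<open>f\<close> makes it do so.\<close>

lemma Ann_binom_eq_0_if_supported_below: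
  fixes f :: "(nat \<Rightarrow>\<^sub>0 nat) \<Rightarrow> nat"
  assumes h: "h \<in> Ann n (mon A - mon B)"
    and supp: "\<And>\<alpha>. lookup h \<alpha> \<noteq> 0 \<Longrightarrow> \<alpha> \<preceq> A"
    and dec: "\<And>\<alpha>. \<alpha> \<preceq> A \<Longrightarrow> A - \<alpha> \<preceq> B \<Longrightarrow> B - (A - \<alpha>) \<preceq> A \<Longrightarrow> f (B - (A - \<alpha>)) < f \<alpha>"
  shows "h = 0"
proof -
  have "lookup h \<alpha> = 0" for \<alpha>
  proof (induction "f \<alpha>" arbitrary: \<alpha> rule: less_induct)
    case less
    show ?case
    proof (cases "\<alpha> \<preceq> A \<and> A - \<alpha> \<preceq> B \<and> B - (A - \<alpha>) \<preceq> A")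
      case True
      then have "lookup h \<alpha> = lookup h (B - (A - \<alpha>))"
        using lookup_Ann_binom[OF h] by simp
      also have "\<dots> = 0"
        using True dec by (intro less.hyps) blast
      finally show ?thesis .
    next
      case False
      then show ?thesis
        using lookup_Ann_binom[OF h] supp by (metis (full_types))
    qed
  qed
  then show ?thesis
    by (simp add: poly_mapping_eqI)
qed

section \<open>A lower bound for the number of generators\<close>

text \<open>For such \<open>p\<close> the coefficient of \<open>x^p\<close> vanishes on \<open>\<frakm> Ann(F)\<close>, so it is a linear
  form on the space \<open>Ann(F) / \<frakm> Ann(F)\<close> of minimal generators.\<close>

definition Ann_corner :: "nat \<Rightarrow> 'k::comm_ring_1 mpoly \<Rightarrow> (nat \<Rightarrow>\<^sub>0 nat) \<Rightarrow> bool" where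
  "Ann_corner n F p \<longleftrightarrow>
     (\<forall>h\<in>Ann n F. \<forall>j. 1 \<le> lookup p j \<longrightarrow> lookup h (p - Poly_Mapping.single j 1) = 0)"

lemma lookup_mult_Ann_corner:
  assumes p: "Ann_corner n F p" and g: "g \<in> Ann n F" and H: "in_vars n H"
  shows "lookup (H * g) p = lookup H 0 * lookup g p"
proof -
  have vanish: "lookup g (p - \<beta>) = 0" if \<beta>: "\<beta> \<in> keys H" "\<beta> \<noteq> 0" "\<beta> \<preceq> p" for \<beta>
  proof -
    obtain j where j: "lookup \<beta> j \<noteq> 0"
      using \<beta>(2) by (metis lookup_zero poly_mapping_eqI)
    define e :: "nat \<Rightarrow>\<^sub>0 nat" where "e = Poly_Mapping.single j 1"
    have "keys (\<beta> - e) \<subseteq> {1..n}"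
      using H \<beta>(1) keys_diff_subset_nat[of \<beta> e] by (auto simp: in_vars_def)
    then have "Poly_Mapping.single (\<beta> - e) 1 * g \<in> Ann n F"
      by (intro Ann_mult[OF in_vars_single g])
    moreover have "1 \<le> lookup p j"
      using \<beta>(3) j by (metis less_one not_le order_trans pw_le_def)
    ultimately have "lookup (Poly_Mapping.single (\<beta> - e) 1 * g) (p - e) = 0"
      using p by (simp add: Ann_corner_def e_def)
    moreover have "\<beta> - e \<preceq> p - e" "(p - e) - (\<beta> - e) = p - \<beta>"
      using \<beta>(3) j by (auto simp: pw_le_def e_def lookup_minus lookup_single when_def
          poly_mapping_eq_iff fun_eq_iff intro!: diff_le_mono)
    ultimately show ?thesis
      by (simp add: lookup_single_mult)
  qed
  have "H * g = (\<Sum>\<beta>\<in>keys H. Poly_Mapping.single \<beta> (lookup H \<beta>) * g)"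
    by (subst poly_mapping_sum_single[of H]) (simp add: sum_distrib_right)
  then have "lookup (H * g) p =
      (\<Sum>\<beta>\<in>keys H. if \<beta> \<preceq> p then lookup H \<beta> * lookup g (p - \<beta>) else 0)"
    by (simp add: lookup_sum lookup_single_mult)
  also have "\<dots> = (\<Sum>\<beta>\<in>keys H. if \<beta> = 0 then lookup H \<beta> * lookup g p else 0)"
    using vanish by (intro sum.cong) auto
  also have "\<dots> = lookup H 0 * lookup g p"
    by (simp add: sum.delta in_keys_iff)
  finally show ?thesis .
qed

lemma identity_not_factor_through_lower_dim:
  fixes C D :: "nat \<Rightarrow> nat \<Rightarrow> 'a::field"
  assumes "\<And>k l. k < Suc n \<Longrightarrow> l < Suc n \<Longrightarrow> (\<Sum>i<n. C k i * D i l) = (if k = l then 1 else 0)"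
  shows False
proof -
  define CM :: "'a mat" where "CM = mat (Suc n) (Suc n) (\<lambda>(k, i). if i < n then C k i else 0)"
  define DM :: "'a mat" where "DM = mat (Suc n) (Suc n) (\<lambda>(i, l). if i < n then D i l else 0)"
  have CM: "CM \<in> carrier_mat (Suc n) (Suc n)" and DM: "DM \<in> carrier_mat (Suc n) (Suc n)"
    by (auto simp: CM_def DM_def)
  have "CM * DM = 1\<^sub>m (Suc n)"
  proof (rule eq_matI)
    fix k l
    assume k: "k < dim_row (1\<^sub>m (Suc n))" and l: "l < dim_col (1\<^sub>m (Suc n))"
    have "(CM * DM) $$ (k, l) = (\<Sum>i\<in>{0..<Suc n}. CM $$ (k, i) * DM $$ (i, l))"
      using k l CM DM by (simp add: scalar_prod_def)
    also have "\<dots> = (\<Sum>i<n. C k i * D i l)"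
      using k l by (simp add: CM_def DM_def atLeast0LessThan)
    also have "\<dots> = 1\<^sub>m (Suc n) $$ (k, l)"
      using assms k l by simp
    finally show "(CM * DM) $$ (k, l) = 1\<^sub>m (Suc n) $$ (k, l)" .
  qed (use CM DM in auto)
  moreover have "det DM = 0"
  proof -
    have "DM $$ (n, p n) = 0" if "p permutes {0..<Suc n}" for p
      using that by (simp add: DM_def permutes_in_image)
    then show ?thesis
      using DM unfolding det_def by simp
  qed
  ultimately show False
    using det_mult[OF CM DM] by simp
qed

text \<open>Writing each \<open>w k\<close> in terms of \<open>n\<close> generators and evaluating at the \<open>p l\<close> factors the
  identity matrix of size \<open>card W > n\<close> through \<open>n\<close> dimensions.\<close>

lemma not_is_CI_if_dual_family:
  fixes F :: "'k::field mpoly" and W :: "'i set"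
  assumes W: "finite W" "n < card W"
    and w: "\<And>k. k \<in> W \<Longrightarrow> w k \<in> Ann n F"
    and p: "\<And>k. k \<in> W \<Longrightarrow> Ann_corner n F (p k)"
    and dual: "\<And>k l. k \<in> W \<Longrightarrow> l \<in> W \<Longrightarrow> lookup (w k) (p l) = (if k = l then 1 else 0)"
  shows "\<not> is_CI n F"
proof
  assume "is_CI n F"
  then obtain gs where gs: "length gs = n" "Ann n F = ideal_gen n gs"
    unfolding is_CI_def by blast
  obtain e where e: "e ` {..<Suc n} \<subseteq> W" "inj_on e {..<Suc n}"
    using card_le_inj[of "{..<Suc n}" W] W by auto
  have "\<forall>k. \<exists>h. k < Suc n \<longrightarrow> w (e k) = (\<Sum>i<n. h i * gs ! i) \<and> (\<forall>i. in_vars n (h i))"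
    using w e(1) gs unfolding ideal_gen_def by blast
  then obtain h where h: "\<And>k. k < Suc n \<Longrightarrow> w (e k) = (\<Sum>i<n. h k i * gs ! i)"
    "\<And>k i. k < Suc n \<Longrightarrow> in_vars n (h k i)"
    by metis
  have gs_Ann: "gs ! i \<in> Ann n F" if "i < n" for i
    using that gs ideal_gen_member[of "gs ! i" gs n] by simp
  show False
  proof (rule identity_not_factor_through_lower_dim)
    fix k l
    assume k: "k < Suc n" and l: "l < Suc n"
    have "(if k = l then 1 else 0) = lookup (w (e k)) (p (e l))"
      using dual[of "e k" "e l"] e k l by (simp add: image_subset_iff inj_on_eq_iff)
    also have "\<dots> = (\<Sum>i<n. lookup (h k i * gs ! i) (p (e l)))"
      using h(1)[OF k] by (simp add: lookup_sum)
    also have "\<dots> = (\<Sum>i<n. lookup (h k i) 0 * lookup (gs ! i) (p (e l)))"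
      using e l by (intro sum.cong refl lookup_mult_Ann_corner[OF p gs_Ann h(2)[OF k]]) auto
    finally show "(\<Sum>i<n. lookup (h k i) 0 * lookup (gs ! i) (p (e l))) = (if k = l then 1 else 0)"
      by simp
  qed
qed

lemma Ann_corner_binom:
  assumes "\<And>j. 1 \<le> lookup p j \<Longrightarrow>
      let \<mu> = p - Poly_Mapping.single j 1 in (\<mu> \<preceq> A \<and> \<not> A - \<mu> \<preceq> B) \<or> (\<mu> \<preceq> B \<and> \<not> B - \<mu> \<preceq> A)"
  shows "Ann_corner n (mon A - mon B) p"
  using assms lookup_Ann_binom_eq_0 lookup_Ann_binom_eq_0' unfolding Ann_corner_def Let_def by metis

section \<open>One side a pure power\<close>

text \<open>The binomial \<open>X^a (\<Prod>k\<in>I. X_k^b_k - X_s^b_s)\<close> with \<open>I = {1..n} - {s}\<close>: \<open>binomF\<close> with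
  \<open>r = n - 1\<close> is the case \<open>s = n\<close>, and with \<open>r = 1\<close> it is minus the case \<open>s = 1\<close>.\<close>

locale pure_power_binom =
  fixes n s :: nat and I :: "nat set" and a b :: "nat \<Rightarrow> nat"
  assumes n3: "3 \<le> n" and s: "s \<in> {1..n}" and I: "I = {1..n} - {s}"
    and b_pos: "\<And>i. i \<in> {1..n} \<Longrightarrow> 1 \<le> b i"
begin

definition A :: "nat \<Rightarrow>\<^sub>0 nat" where "A = expv {1..n} a + expv I b"

definition B :: "nat \<Rightarrow>\<^sub>0 nat" where "B = expv {1..n} a + Poly_Mapping.single s (b s)"

lemma finite_I: "finite I"
  using I by simp

lemma card_I: "card I = n - 1"
  using I s by (simp add: card_Diff_singleton)

lemma s_notin_I: "s \<notin> I"
  using I by simp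

lemma I_subset: "I \<subseteq> {1..n}"
  using I by auto

lemma b_pos_I: "k \<in> I \<Longrightarrow> 1 \<le> b k"
  using b_pos I_subset by auto

lemma b_pos_s: "1 \<le> b s"
  using b_pos s by auto

lemma index_cases: obtains "x = s" | "x \<in> I" | "x \<notin> {1..n}"
  using I by auto

lemma lookup_A_I: "x \<in> I \<Longrightarrow> lookup A x = a x + b x"
  and lookup_A_s: "lookup A s = a s"
  and lookup_B_I: "x \<in> I \<Longrightarrow> lookup B x = a x"
  and lookup_B_s: "lookup B s = a s + b s"
  and lookup_A_B_outside: "x \<notin> {1..n} \<Longrightarrow> lookup A x = 0 \<and> lookup B x = 0"
  using I_subset s s_notin_I finite_I
  by (auto simp: A_def B_def lookup_add lookup_expv lookup_single when_def)

lemma binomF_eq_if_last: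
  assumes "s = n"
  shows "binomF n (n - 1) a b = mon A - mon B"
proof -
  have "I = {1..n - 1}" "{n - 1 + 1..n} = {s}"
    using assms I n3 by auto
  then show ?thesis
    unfolding binomF_def A_def B_def by (simp add: expv_def)
qed

lemma binomF_eq_if_first:
  assumes "s = 1"
  shows "binomF n 1 a b = - (mon A - mon B)"
proof -
  have "I = {1 + 1..n}"
    using assms I by auto
  then show ?thesis
    using assms unfolding binomF_def A_def B_def by (simp add: expv_def)
qed

lemma
  assumes "\<mu> \<preceq> A" "A - \<mu> \<preceq> B"
  shows lookup_shift_s: "lookup (B - (A - \<mu>)) s = lookup \<mu> s + b s"
    and lookup_shift_I: "k \<in> I \<Longrightarrow> lookup (B - (A - \<mu>)) k = lookup \<mu> k - b k"
    and lookup_shift_outside: "x \<notin> {1..n} \<Longrightarrow> lookup (B - (A - \<mu>)) x = 0"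
  using assms[unfolded pw_le_def, THEN spec, of s] assms[unfolded pw_le_def, THEN spec, of k]
  by (auto simp: lookup_minus lookup_A_I lookup_B_I lookup_A_s lookup_B_s lookup_A_B_outside)

text \<open>The shift \<open>\<mu> \<mapsto> B - (A - \<mu>)\<close> adds \<open>b_s\<close> at \<open>s\<close> and subtracts \<open>b_k\<close> at every \<open>k \<in> I\<close>:
  it stays below \<open>A\<close> at \<open>s\<close> for \<open>K\<close> steps but runs out at some \<open>k\<close> within \<open>K + 1\<close> steps.\<close>

lemma lookup_Ann_eq_0_by_shifting:
  assumes h: "h \<in> Ann n (mon A - mon B)"
  shows "\<mu> \<preceq> A \<Longrightarrow> lookup \<mu> s + K * b s \<le> a s \<Longrightarrow> \<exists>k\<in>I. lookup \<mu> k < (K + 1) * b k \<Longrightarrow>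
    lookup h \<mu> = 0"
proof (induction K arbitrary: \<mu>)
  case 0
  then obtain k where "k \<in> I" "lookup \<mu> k < b k"
    by auto
  then have "\<not> A - \<mu> \<preceq> B"
    unfolding pw_le_def by (auto simp: lookup_minus lookup_A_I lookup_B_I intro!: exI[of _ k])
  then show ?case
    using lookup_Ann_binom_eq_0[OF h "0.prems"(1)] by simp
next
  case (Suc K)
  show ?case
  proof (cases "A - \<mu> \<preceq> B")
    case False
    then show ?thesis
      using lookup_Ann_binom_eq_0[OF h Suc.prems(1)] by simp
  next
    case True
    note shift = lookup_shift_s[OF Suc.prems(1) True] lookup_shift_I[OF Suc.prems(1) True]
      lookup_shift_outside[OF Suc.prems(1) True]
    have "lookup h (B - (A - \<mu>)) = 0"
    proof (rule Suc.IH)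
      show "B - (A - \<mu>) \<preceq> A"
        unfolding pw_le_def
      proof
        fix x
        show "lookup (B - (A - \<mu>)) x \<le> lookup A x"
          using Suc.prems(1)[unfolded pw_le_def, THEN spec, of x] Suc.prems(2) lookup_A_B_outside[of x]
          by (cases x rule: index_cases) (auto simp: shift lookup_A_I lookup_A_s)
      qed
      show "lookup (B - (A - \<mu>)) s + K * b s \<le> a s"
        using Suc.prems(2) by (simp add: shift)
      show "\<exists>k\<in>I. lookup (B - (A - \<mu>)) k < (K + 1) * b k"
        using Suc.prems(3) by (force simp: shift)
    qed
    then show ?thesis
      using lookup_Ann_binom[OF h Suc.prems(1)] True by simp
  qed
qed

lemma lookup_Ann_eq_0_below_b_s:
  assumes h: "h \<in> Ann n (mon A - mon B)" and "\<mu> \<preceq> B" "lookup \<mu> s < b s"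
  shows "lookup h \<mu> = 0"
proof (rule lookup_Ann_binom_eq_0'[OF h assms(2)])
  show "\<not> B - \<mu> \<preceq> A"
    unfolding pw_le_def using assms(3)
    by (auto simp: lookup_minus lookup_A_s lookup_B_s intro!: exI[of _ s])
qed

lemma Ann_eq_0_if_supported_below_A:
  assumes h: "h \<in> Ann n (mon A - mon B)" and supp: "\<And>\<alpha>. lookup h \<alpha> \<noteq> 0 \<Longrightarrow> \<alpha> \<preceq> A"
  shows "h = 0"
proof (rule Ann_binom_eq_0_if_supported_below[OF h supp, of "\<lambda>\<alpha>. a s - lookup \<alpha> s"])
  fix \<alpha>
  assume \<alpha>: "\<alpha> \<preceq> A" "B - (A - \<alpha>) \<preceq> A"
  have "lookup \<alpha> s \<le> a s" "lookup (B - (A - \<alpha>)) s \<le> a s"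
    using \<alpha> by (simp_all add: pw_le_def lookup_A_s[symmetric])
  moreover from this have "lookup (B - (A - \<alpha>)) s = lookup \<alpha> s + b s"
    by (simp add: lookup_minus lookup_A_s lookup_B_s)
  ultimately show "a s - lookup (B - (A - \<alpha>)) s < a s - lookup \<alpha> s"
    using b_pos_s by simp
qed

text \<open>The exponent of \<open>x_i^c (\<Prod>k\<in>I. x_k^b_k)^j x_s^(a_s + 1 - j b_s)\<close>; for \<open>c = 0\<close> these are the
  terms of the generator \<open>G\<close>.\<close>

definition chain_exp :: "nat \<Rightarrow> nat \<Rightarrow> nat \<Rightarrow> nat \<Rightarrow>\<^sub>0 nat" where
  "chain_exp c i j =
     Poly_Mapping.single i c + expv I (\<lambda>k. j * b k) + Poly_Mapping.single s (a s + 1 - j * b s)"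

lemma lookup_chain_exp:
  "i \<in> I \<Longrightarrow> lookup (chain_exp c i j) x =
     (if x = i then c else 0) + (if x \<in> I then j * b x else 0) + (if x = s then a s + 1 - j * b s else 0)"
  unfolding chain_exp_def using finite_I by (simp add: lookup_add lookup_expv lookup_single when_def)

lemma
  assumes "i \<in> I"
  shows lookup_chain_exp_same: "lookup (chain_exp c i j) i = c + j * b i"
    and lookup_chain_exp_I: "x \<in> I \<Longrightarrow> x \<noteq> i \<Longrightarrow> lookup (chain_exp c i j) x = j * b x"
    and lookup_chain_exp_s: "lookup (chain_exp c i j) s = a s + 1 - j * b s"
    and lookup_chain_exp_outside: "x \<notin> {1..n} \<Longrightarrow> lookup (chain_exp c i j) x = 0"
  using assms s_notin_I I_subset s by (auto simp: lookup_chain_exp)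

lemma keys_chain_exp: "i \<in> I \<Longrightarrow> keys (chain_exp c i j) \<subseteq> {1..n}"
  using lookup_chain_exp_outside by (metis in_keys_iff subsetI)

lemma inj_on_chain_exp: "i \<in> I \<Longrightarrow> inj_on (chain_exp c i) J"
  by (rule inj_onI) (metis lookup_chain_exp_same b_pos_I add_left_cancel mult_cancel2 not_one_le_zero)

lemma chain_exp_0: "chain_exp 0 i 0 = Poly_Mapping.single s (a s + 1)"
  by (simp add: chain_exp_def expv_def)

lemma chain_exp_link:
  assumes i: "i \<in> I" and j: "j \<in> {1..N}" and N: "N * b s \<le> a s + 1"
    and below: "\<And>k. k \<in> I \<Longrightarrow> 0 < N \<Longrightarrow> (N - 1) * b k + (if k = i then c else 0) \<le> a k"
  shows "chain_exp c i j \<preceq> A \<and> chain_exp c i (j - 1) \<preceq> B \<and>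
    A - chain_exp c i j = B - chain_exp c i (j - 1)"
proof -
  have "lookup (chain_exp c i j) x \<le> lookup A x \<and> lookup (chain_exp c i (j - 1)) x \<le> lookup B x \<and>
      lookup A x - lookup (chain_exp c i j) x = lookup B x - lookup (chain_exp c i (j - 1)) x" for x
  proof (cases x rule: index_cases)
    case 1
    have "j * b s \<le> a s + 1"
      using N j by (meson atLeastAtMost_iff le_trans mult_le_mono1)
    moreover have "(j - 1) * b s + b s = j * b s" "1 \<le> j * b s"
      using j b_pos_s by (cases j; simp)+
    ultimately show ?thesis
      using 1 i by (simp add: lookup_chain_exp_s lookup_A_s lookup_B_s; linarith)
  next
    case 2
    obtain j' where j': "j = Suc j'"
      using j by (cases j) auto
    have "j' * b x \<le> (N - 1) * b x"
      using j j' by (intro mult_le_mono1) auto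
    moreover have "(N - 1) * b x + (if x = i then c else 0) \<le> a x"
      using below[OF 2] j by simp
    ultimately have "j' * b x + (if x = i then c else 0) \<le> a x"
      by linarith
    then show ?thesis
      using 2 i j' by (cases "x = i") (simp_all add: lookup_chain_exp_same lookup_chain_exp_I lookup_A_I lookup_B_I)
  next
    case 3
    then show ?thesis
      using lookup_A_B_outside[of x] lookup_chain_exp_outside[OF i 3] by simp
  qed
  then show ?thesis
    by (auto simp: pw_le_def poly_mapping_eq_iff fun_eq_iff lookup_minus)
qed

lemma chain_sum_in_Ann:
  assumes i: "i \<in> I" and N: "N * b s \<le> a s + 1"
    and below: "\<And>k. k \<in> I \<Longrightarrow> 0 < N \<Longrightarrow> (N - 1) * b k + (if k = i then c else 0) \<le> a k"
    and exit: "\<exists>k\<in>I. a k < N * b k + (if k = i then c else 0)"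
  shows "(\<Sum>j=0..N. mon (chain_exp c i j) :: 'k::comm_ring_1 mpoly) \<in> Ann n (mon A - mon B)"
proof (rule sum_mon_chain_in_Ann_binom)
  show "inj_on (chain_exp c i) {0..N}"
    using i by (rule inj_on_chain_exp)
  show "keys (chain_exp c i j) \<subseteq> {1..n}" for j
    using i by (rule keys_chain_exp)
  show "chain_exp c i j \<preceq> A \<and> chain_exp c i (j - 1) \<preceq> B \<and>
      A - chain_exp c i j = B - chain_exp c i (j - 1)" if "j \<in> {1..N}" for j
    using chain_exp_link[OF i that N below] .
  show "\<not> chain_exp c i 0 \<preceq> A"
    unfolding pw_le_def using i by (auto simp: lookup_chain_exp_s lookup_A_s intro!: exI[of _ s])
  obtain k where k: "k \<in> I" "a k < N * b k + (if k = i then c else 0)"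
    using exit by auto
  then have "lookup B k < lookup (chain_exp c i N) k"
    using i by (cases "k = i") (auto simp: lookup_chain_exp_same lookup_chain_exp_I lookup_B_I)
  then show "\<not> chain_exp c i N \<preceq> B"
    unfolding pw_le_def by (auto simp: not_le)
qed

lemma G_eq_chain_sum:
  assumes "i \<in> I"
  shows "xpow s (a s + 1) + (\<Sum>j=1..N. (\<Prod>k\<in>I. xpow k (b k)) ^ j * xpow s (a s + 1 - j * b s))
       = (\<Sum>j=0..N. mon (chain_exp 0 i j) :: 'k::comm_ring_1 mpoly)"
proof -
  have "(\<Prod>k\<in>I. xpow k (b k)) ^ j * xpow s (a s + 1 - j * b s) = (mon (chain_exp 0 i j) :: 'k mpoly)" for j
    by (simp only: prod_xpow[OF finite_I] mon_expv_power) (simp add: xpow_def mon_mult chain_exp_def)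
  then show ?thesis
    by (simp add: sum.atLeast_Suc_atMost chain_exp_0 xpow_def)
qed

definition reduces_below_A :: "'k::comm_ring_1 mpoly list \<Rightarrow> 'k mpoly \<Rightarrow> bool" where
  "reduces_below_A gs f \<longleftrightarrow> (\<exists>g\<in>ideal_gen n gs. \<forall>\<alpha>. lookup (f - g) \<alpha> \<noteq> 0 \<longrightarrow> \<alpha> \<preceq> A)"

lemma reduces_below_A_ideal_gen: "f \<in> ideal_gen n gs \<Longrightarrow> reduces_below_A gs f"
  unfolding reduces_below_A_def by (intro bexI[of _ f]) auto

lemma reduces_below_A_add:
  assumes "reduces_below_A gs f" "reduces_below_A gs g"
  shows "reduces_below_A gs (f + g)"
proof -
  obtain f' g' where "f' \<in> ideal_gen n gs" "g' \<in> ideal_gen n gs"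
    and "\<forall>\<alpha>. lookup (f - f') \<alpha> \<noteq> 0 \<longrightarrow> \<alpha> \<preceq> A" "\<forall>\<alpha>. lookup (g - g') \<alpha> \<noteq> 0 \<longrightarrow> \<alpha> \<preceq> A"
    using assms unfolding reduces_below_A_def by blast
  moreover have "lookup (f + g - (f' + g')) \<alpha> = lookup (f - f') \<alpha> + lookup (g - g') \<alpha>" for \<alpha>
    by (simp add: lookup_add lookup_minus algebra_simps)
  ultimately show ?thesis
    unfolding reduces_below_A_def by (metis add.right_neutral ideal_gen_add)
qed

lemma reduces_below_A_smult:
  assumes "reduces_below_A gs f"
  shows "reduces_below_A gs (Poly_Mapping.single 0 c * f)"
proof -
  obtain g where g: "g \<in> ideal_gen n gs" "\<forall>\<alpha>. lookup (f - g) \<alpha> \<noteq> 0 \<longrightarrow> \<alpha> \<preceq> A"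
    using assms unfolding reduces_below_A_def by blast
  have "Poly_Mapping.single 0 c * g \<in> ideal_gen n gs"
    using g(1) by (intro ideal_gen_mult in_vars_single) auto
  moreover have "Poly_Mapping.single 0 c * f - Poly_Mapping.single 0 c * g = Poly_Mapping.single 0 c * (f - g)"
    by (simp add: algebra_simps)
  then have "\<forall>\<alpha>. lookup (Poly_Mapping.single 0 c * f - Poly_Mapping.single 0 c * g) \<alpha> \<noteq> 0 \<longrightarrow> \<alpha> \<preceq> A"
    using g(2) by (simp add: lookup_single_mult) (metis mult_zero_right)
  ultimately show ?thesis
    unfolding reduces_below_A_def by blast
qed

lemma reduces_below_A_sum:
  "(\<And>i. i \<in> J \<Longrightarrow> reduces_below_A gs (f i)) \<Longrightarrow> reduces_below_A gs (\<Sum>i\<in>J. f i)"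
  by (induction J rule: infinite_finite_induct)
    (auto intro: reduces_below_A_add reduces_below_A_ideal_gen ideal_gen_0)

lemma reduces_below_A_diff:
  fixes f g :: "'k::comm_ring_1 mpoly"
  assumes "reduces_below_A gs f" "reduces_below_A gs g"
  shows "reduces_below_A gs (f - g)"
proof -
  have "f - g = f + Poly_Mapping.single 0 (- 1) * g"
    by (simp add: single_uminus)
  then show ?thesis
    using assms by (metis reduces_below_A_add reduces_below_A_smult)
qed

text \<open>Dividing \<open>x^\<alpha>\<close> by the leading term \<open>x_s^(a_s + 1)\<close> of \<open>G\<close> leaves monomials of lower degree
  in \<open>x_s\<close>.\<close>

lemma mon_eq_mult_G_minus:
  assumes "a s + 1 \<le> lookup \<alpha> s" and "\<beta> = \<alpha> - Poly_Mapping.single s (a s + 1)"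
  shows "mon \<alpha> = mon \<beta> * (\<Sum>j=0..N. mon (chain_exp 0 i j)) - (\<Sum>j=1..N. mon (\<beta> + chain_exp 0 i j) :: 'k::comm_ring_1 mpoly)"
proof -
  have "\<beta> + chain_exp 0 i 0 = \<alpha>"
    using assms by (auto simp: chain_exp_0 poly_mapping_eq_iff fun_eq_iff lookup_add lookup_minus lookup_single when_def)
  moreover have "mon \<beta> * (\<Sum>j=0..N. mon (chain_exp 0 i j)) = (\<Sum>j=0..N. mon (\<beta> + chain_exp 0 i j) :: 'k mpoly)"
    by (simp add: sum_distrib_left mon_mult)
  ultimately show ?thesis
    by (simp add: sum.atLeast_Suc_atMost)
qed

lemma above_A_cases:
  assumes "keys \<alpha> \<subseteq> {1..n}"
  obtains "\<alpha> \<preceq> A" | x where "x \<in> I" "lookup A x < lookup \<alpha> x" | "lookup A s < lookup \<alpha> s"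
proof (cases "\<alpha> \<preceq> A")
  case False
  then obtain x where x: "lookup A x < lookup \<alpha> x"
    by (auto simp: pw_le_def not_le)
  then have "x \<in> {1..n}"
    using assms by (metis in_keys_iff not_less_zero subsetD)
  then show ?thesis
    using x that by (cases x rule: index_cases) auto
qed

lemma reduces_below_A_mon:
  fixes gs :: "'k::comm_ring_1 mpoly list"
  assumes pure: "\<And>k. k \<in> I \<Longrightarrow> xpow k (a k + b k + 1) \<in> ideal_gen n gs"
    and G: "(\<Sum>j=0..N. mon (chain_exp 0 i j)) \<in> ideal_gen n gs" and i: "i \<in> I"
  shows "keys \<alpha> \<subseteq> {1..n} \<Longrightarrow> reduces_below_A gs (mon \<alpha>)"
proof (induction "lookup \<alpha> s" arbitrary: \<alpha> rule: less_induct)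
  case less
  from less.prems show ?case
  proof (cases rule: above_A_cases)
    case 1
    then show ?thesis
      unfolding reduces_below_A_def by (intro bexI[of _ 0] ideal_gen_0) (auto simp: lookup_mon)
  next
    case (2 x)
    have "Poly_Mapping.single x (a x + b x + 1) \<preceq> \<alpha>"
      using 2 by (auto simp: pw_le_def lookup_single when_def lookup_A_I)
    then have "mon \<alpha> \<in> ideal_gen n gs"
      using less.prems pure[OF 2(1)] unfolding xpow_def by (rule mon_in_ideal_gen_if_pw_le)
    then show ?thesis
      by (rule reduces_below_A_ideal_gen)
  next
    case 3
    define \<beta> where "\<beta> = \<alpha> - Poly_Mapping.single s (a s + 1)"
    have keys_\<beta>: "keys \<beta> \<subseteq> {1..n}"
      using less.prems keys_diff_subset_nat \<beta>_def by blast
    have "reduces_below_A gs (mon \<beta> * (\<Sum>j=0..N. mon (chain_exp 0 i j)))"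
      by (intro reduces_below_A_ideal_gen ideal_gen_mult[OF in_vars_mon[OF keys_\<beta>] G])
    moreover have "reduces_below_A gs (mon (\<beta> + chain_exp 0 i j))" if j: "j \<in> {1..N}" for j
    proof (rule less.hyps)
      have "1 \<le> j * b s"
        using j b_pos_s by (simp add: Suc_le_eq)
      moreover have "lookup (\<beta> + chain_exp 0 i j) s = lookup \<alpha> s - (a s + 1) + (a s + 1 - j * b s)"
        using i by (simp add: \<beta>_def lookup_add lookup_minus lookup_chain_exp_s)
      ultimately show "lookup (\<beta> + chain_exp 0 i j) s < lookup \<alpha> s"
        using 3 lookup_A_s by linarith
      show "keys (\<beta> + chain_exp 0 i j) \<subseteq> {1..n}"
        using keys_\<beta> keys_chain_exp[OF i] by (simp add: keys_add_nat)
    qed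
    then have "reduces_below_A gs (\<Sum>j=1..N. mon (\<beta> + chain_exp 0 i j))"
      by (rule reduces_below_A_sum)
    ultimately have "reduces_below_A gs (mon \<beta> * (\<Sum>j=0..N. mon (chain_exp 0 i j)) -
        (\<Sum>j=1..N. mon (\<beta> + chain_exp 0 i j)))"
      by (rule reduces_below_A_diff)
    moreover have "mon \<alpha> = mon \<beta> * (\<Sum>j=0..N. mon (chain_exp 0 i j)) -
        (\<Sum>j=1..N. mon (\<beta> + chain_exp 0 i j) :: 'k mpoly)"
      using 3 \<beta>_def by (intro mon_eq_mult_G_minus) (simp_all add: lookup_A_s)
    ultimately show ?thesis
      by simp
  qed
qed

lemma Ann_subset_ideal_gen:
  fixes gs :: "'k::comm_ring_1 mpoly list"
  assumes pure: "\<And>k. k \<in> I \<Longrightarrow> xpow k (a k + b k + 1) \<in> ideal_gen n gs"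
    and G: "(\<Sum>j=0..N. mon (chain_exp 0 i j)) \<in> ideal_gen n gs" and i: "i \<in> I"
    and gs: "set gs \<subseteq> Ann n (mon A - mon B)"
  shows "Ann n (mon A - mon B) \<subseteq> ideal_gen n gs"
proof
  fix f :: "'k mpoly"
  assume f: "f \<in> Ann n (mon A - mon B)"
  have "reduces_below_A gs (\<Sum>\<alpha>\<in>keys f. Poly_Mapping.single 0 (lookup f \<alpha>) * mon \<alpha>)"
  proof (rule reduces_below_A_sum)
    fix \<alpha>
    assume "\<alpha> \<in> keys f"
    then have "keys \<alpha> \<subseteq> {1..n}"
      using f by (simp add: Ann_def in_vars_def)
    then show "reduces_below_A gs (Poly_Mapping.single 0 (lookup f \<alpha>) * mon \<alpha>)"
      by (intro reduces_below_A_smult reduces_below_A_mon[OF pure G i])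
  qed
  moreover have "f = (\<Sum>\<alpha>\<in>keys f. Poly_Mapping.single 0 (lookup f \<alpha>) * mon \<alpha>)"
    by (subst poly_mapping_sum_single) (simp add: Defs.mon_def mult_single)
  ultimately have "reduces_below_A gs f"
    by metis
  then obtain g where g: "g \<in> ideal_gen n gs" and supp: "\<And>\<alpha>. lookup (f - g) \<alpha> \<noteq> 0 \<Longrightarrow> \<alpha> \<preceq> A"
    unfolding reduces_below_A_def by blast
  have "f - g \<in> Ann n (mon A - mon B)"
    using Ann_diff[OF f] ideal_gen_subset_Ann[OF gs] g by blast
  then have "f - g = 0"
    using supp by (rule Ann_eq_0_if_supported_below_A)
  then show "f \<in> ideal_gen n gs"
    using g by simp
qed

lemma xpow_in_Ann:
  assumes k: "k \<in> I"
  shows "xpow k (a k + b k + 1) \<in> Ann n (mon A - mon B :: 'k::comm_ring_1 mpoly)"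
  unfolding xpow_def
proof (rule mon_in_Ann_binom)
  show "keys (Poly_Mapping.single k (a k + b k + 1)) \<subseteq> {1..n}"
    using k I_subset by auto
  show "\<not> Poly_Mapping.single k (a k + b k + 1) \<preceq> A" "\<not> Poly_Mapping.single k (a k + b k + 1) \<preceq> B"
    unfolding pw_le_def using k by (auto simp: lookup_A_I lookup_B_I intro!: exI[of _ k])
qed

lemma min_quotient_attained:
  obtains i where "i \<in> I" "Min {a i div b i | i. i \<in> I} = a i div b i"
    "\<And>k. k \<in> I \<Longrightarrow> a i div b i \<le> a k div b k"
proof -
  have quotients: "{a i div b i | i. i \<in> I} = (\<lambda>i. a i div b i) ` I"
    by auto
  have "I \<noteq> {}"
    using card_I n3 by auto
  then have "Min ((\<lambda>i. a i div b i) ` I) \<in> (\<lambda>i. a i div b i) ` I"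
    using finite_I by (intro Min_in) auto
  then obtain i where "i \<in> I" "Min ((\<lambda>i. a i div b i) ` I) = a i div b i"
    by auto
  moreover have "Min ((\<lambda>i. a i div b i) ` I) \<le> a k div b k" if "k \<in> I" for k
    using finite_I that by simp
  ultimately show ?thesis
    using that unfolding quotients by metis
qed

lemma G_in_Ann:
  assumes i: "i \<in> I" and min: "\<And>k. k \<in> I \<Longrightarrow> a i div b i \<le> a k div b k"
    and cond: "\<exists>i'\<in>I. a i' < ((a s + 1) div b s) * b i'"
  shows "(\<Sum>j=0..a i div b i + 1. mon (chain_exp 0 i j) :: 'k::comm_ring_1 mpoly) \<in> Ann n (mon A - mon B)"
proof (rule chain_sum_in_Ann[OF i])
  obtain i' where i': "i' \<in> I" "a i' < ((a s + 1) div b s) * b i'"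
    using cond by blast
  then have "a i' div b i' < (a s + 1) div b s"
    using b_pos_I[OF i'(1)] by (simp add: div_less_iff_less_mult)
  then have "a i div b i + 1 \<le> (a s + 1) div b s"
    using min[OF i'(1)] by simp
  then show "(a i div b i + 1) * b s \<le> a s + 1"
    using div_times_less_eq_dividend le_trans mult_le_mono1 by blast
  fix k
  assume k: "k \<in> I"
  have "(a i div b i) * b k \<le> (a k div b k) * b k"
    using min[OF k] by (rule mult_le_mono1)
  also have "\<dots> \<le> a k"
    by (rule div_times_less_eq_dividend)
  finally show "(a i div b i + 1 - 1) * b k + (if k = i then 0 else 0) \<le> a k"
    by simp
next
  have "a i < b i + (a i div b i) * b i"
    using b_pos_I[OF i] by (intro dividend_less_div_times) simp
  then show "\<exists>k\<in>I. a k < (a i div b i + 1) * b k + (if k = i then 0 else 0)"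
    using i by (intro bexI[of _ i]) (simp_all add: algebra_simps)
qed

lemma Ann_eq_ideal_gen:
  fixes os :: "nat list"
  assumes cond: "\<exists>i\<in>I. a i < ((a s + 1) div b s) * b i" and os: "set os = I"
  shows "Ann n (mon A - mon B :: 'k::comm_ring_1 mpoly) =
    ideal_gen n (map (\<lambda>i. xpow i (a i + b i + 1)) os @
      [xpow s (a s + 1) + (\<Sum>j=1..Min {a i div b i | i. i \<in> I} + 1.
          (\<Prod>i\<in>I. xpow i (b i)) ^ j * xpow s (a s + 1 - j * b s))])"
    (is "?Ann = ideal_gen n (?pure @ [?G])")
proof -
  obtain i where i: "i \<in> I" "Min {a i div b i | i. i \<in> I} = a i div b i"
    and min: "\<And>k. k \<in> I \<Longrightarrow> a i div b i \<le> a k div b k"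
    using min_quotient_attained by blast
  have G_eq: "?G = (\<Sum>j=0..a i div b i + 1. mon (chain_exp 0 i j))"
    unfolding i(2) by (rule G_eq_chain_sum[OF i(1)])
  have gens_Ann: "set (?pure @ [?G]) \<subseteq> ?Ann"
    using os xpow_in_Ann G_in_Ann[OF i(1) min cond] unfolding G_eq by auto
  show ?thesis
  proof (rule equalityI)
    show "?Ann \<subseteq> ideal_gen n (?pure @ [?G])"
    proof (rule Ann_subset_ideal_gen[OF _ _ i(1) gens_Ann])
      show "xpow k (a k + b k + 1) \<in> ideal_gen n (?pure @ [?G])" if "k \<in> I" for k
        using that os by (intro ideal_gen_member) auto
      show "(\<Sum>j=0..a i div b i + 1. mon (chain_exp 0 i j)) \<in> ideal_gen n (?pure @ [?G])"
        unfolding G_eq[symmetric] by (intro ideal_gen_member) simp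
    qed
    show "ideal_gen n (?pure @ [?G]) \<subseteq> ?Ann"
      using gens_Ann by (rule ideal_gen_subset_Ann)
  qed
qed

lemma other_in_I: "\<exists>k\<in>I. k \<noteq> i"
proof (rule ccontr)
  assume "\<not> (\<exists>k\<in>I. k \<noteq> i)"
  then have "card I \<le> card {i}"
    by (intro card_mono) auto
  then show False
    using card_I n3 by simp
qed

lemma Ann_corner_xpow:
  assumes x: "x \<in> I"
  shows "Ann_corner n (mon A - mon B) (Poly_Mapping.single x (a x + b x + 1))"
proof (rule Ann_corner_binom)
  fix j
  assume "1 \<le> lookup (Poly_Mapping.single x (a x + b x + 1)) j"
  then have "j = x"
    by (auto simp: lookup_single when_def split: if_splits)
  then have \<mu>: "Poly_Mapping.single x (a x + b x + 1) - Poly_Mapping.single j 1 = Poly_Mapping.single x (a x + b x)"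
    by (simp flip: single_diff)
  obtain y where y: "y \<in> I" "y \<noteq> x"
    using other_in_I by blast
  have "Poly_Mapping.single x (a x + b x) \<preceq> A"
    unfolding pw_le_def using x by (simp add: lookup_single when_def lookup_A_I)
  moreover have "\<not> A - Poly_Mapping.single x (a x + b x) \<preceq> B"
    unfolding pw_le_def using y b_pos_I[OF y(1)]
    by (auto simp: lookup_minus lookup_single lookup_A_I lookup_B_I intro!: exI[of _ y])
  ultimately show "let \<mu> = Poly_Mapping.single x (a x + b x + 1) - Poly_Mapping.single j 1
      in \<mu> \<preceq> A \<and> \<not> A - \<mu> \<preceq> B \<or> \<mu> \<preceq> B \<and> \<not> B - \<mu> \<preceq> A"
    unfolding \<mu> Let_def by blast
qed

end

text \<open>If \<open>q b_i \<le> a_i\<close> for all \<open>i \<in> I\<close>, where \<open>q = (a_s + 1) div b_s\<close>, every \<open>i \<in> I\<close> gives its own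
  minimal generator \<open>witness i\<close>, a chain of length \<open>q + 1\<close> with \<open>x_i\<close>-exponents raised so that it
  exits the box below \<open>B\<close> at \<open>i\<close>; with the \<open>n - 1\<close> pure powers these are \<open>2 n - 2 > n\<close>.\<close>

locale pure_power_binom_nonCI = pure_power_binom +
  assumes q_le: "\<And>i. i \<in> I \<Longrightarrow> ((a s + 1) div b s) * b i \<le> a i"
begin

definition q :: nat where "q = (a s + 1) div b s"

definition excess :: "nat \<Rightarrow> nat" where "excess i = a i - q * b i + 1"

definition corner :: "nat \<Rightarrow> nat \<Rightarrow>\<^sub>0 nat" where "corner i = chain_exp (excess i) i q"

definition witness :: "nat \<Rightarrow> 'k::comm_ring_1 mpoly" where
  "witness i = (\<Sum>j=0..q. mon (chain_exp (excess i) i j))"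

lemma q_b_I: "k \<in> I \<Longrightarrow> q * b k \<le> a k"
  using q_le by (simp add: q_def)

lemma q_b_s: "q * b s \<le> a s + 1" and a_s_mod: "a s + 1 - q * b s < b s"
  unfolding q_def using b_pos_s
  by (simp_all add: div_times_less_eq_dividend minus_div_mult_eq_mod)

lemma excess_q: "i \<in> I \<Longrightarrow> excess i + q * b i = a i + 1"
  using q_le unfolding excess_def q_def by fastforce

lemma
  assumes "i \<in> I"
  shows lookup_corner_same: "lookup (corner i) i = a i + 1"
    and lookup_corner_I: "k \<in> I \<Longrightarrow> k \<noteq> i \<Longrightarrow> lookup (corner i) k = q * b k"
    and lookup_corner_s: "lookup (corner i) s = a s + 1 - q * b s"
    and lookup_corner_outside: "x \<notin> {1..n} \<Longrightarrow> lookup (corner i) x = 0"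
  using assms excess_q unfolding corner_def
  by (simp_all add: lookup_chain_exp_same lookup_chain_exp_I lookup_chain_exp_s lookup_chain_exp_outside)

lemma witness_in_Ann: "i \<in> I \<Longrightarrow> witness i \<in> Ann n (mon A - mon B :: 'k::comm_ring_1 mpoly)"
  unfolding witness_def
proof (rule chain_sum_in_Ann)
  assume i: "i \<in> I"
  show "q * b s \<le> a s + 1"
    by (rule q_b_s)
  show "(q - 1) * b k + (if k = i then excess i else 0) \<le> a k" if k: "k \<in> I" and "0 < q" for k
    using q_le[OF k] excess_q[OF i] b_pos_I[OF k] \<open>0 < q\<close> unfolding q_def[symmetric]
    by (cases q) (auto simp: algebra_simps)
  show "\<exists>k\<in>I. a k < q * b k + (if k = i then excess i else 0)"
    using i excess_q[OF i] by (intro bexI[of _ i]) auto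
qed

lemma lookup_witness:
  "i \<in> I \<Longrightarrow> lookup (witness i :: 'k::comm_ring_1 mpoly) \<mu> = (if \<mu> \<in> chain_exp (excess i) i ` {0..q} then 1 else 0)"
  unfolding witness_def by (rule lookup_sum_mon[OF inj_on_chain_exp]) auto

lemma corner_in_chain: "corner i \<in> chain_exp (excess i) i ` {0..q}"
  unfolding corner_def by auto

lemma corner_notin_other_chain:
  assumes i: "i \<in> I" and i': "i' \<in> I" "i' \<noteq> i"
  shows "corner i' \<notin> chain_exp (excess i) i ` {0..q}"
proof
  assume "corner i' \<in> chain_exp (excess i) i ` {0..q}"
  then obtain j where j: "j \<le> q" "corner i' = chain_exp (excess i) i j"
    by auto
  then have "a i' + 1 = j * b i'"
    using i i' lookup_corner_same[OF i'(1)] lookup_chain_exp_I[OF i i'] by simp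
  moreover have "j * b i' \<le> q * b i'"
    using j by simp
  ultimately show False
    using q_le[OF i'(1)] unfolding q_def by simp
qed

lemma single_notin_chain:
  assumes i: "i \<in> I" and j: "j \<le> q"
  shows "Poly_Mapping.single x v \<noteq> chain_exp (excess i) i j"
proof
  assume eq: "Poly_Mapping.single x v = chain_exp (excess i) i j"
  obtain t where t: "t \<noteq> i" "lookup (chain_exp (excess i) i j) t \<noteq> 0"
  proof (cases "j = 0")
    case True
    then show ?thesis
      using that[of s] i s_notin_I by (auto simp: lookup_chain_exp_s)
  next
    case False
    obtain k where "k \<in> I" "k \<noteq> i"
      using other_in_I by blast
    then show ?thesis
      using that[of k] i False b_pos_I[of k] by (auto simp: lookup_chain_exp_I)
  qed
  moreover have "lookup (chain_exp (excess i) i j) i \<noteq> 0"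
    using i by (simp add: lookup_chain_exp_same excess_def)
  ultimately show False
    using eq by (metis lookup_single_not_eq)
qed

lemma lookup_Ann_corner_minus_s:
  assumes h: "h \<in> Ann n (mon A - mon B)" and i: "i \<in> I" and q_s: "q * b s \<le> a s"
  shows "lookup h (corner i - Poly_Mapping.single s 1) = 0"
proof (rule lookup_Ann_eq_0_by_shifting[OF h, of _ q])
  note lookup_corner = lookup_corner_same[OF i] lookup_corner_I[OF i] lookup_corner_s[OF i]
    lookup_corner_outside[OF i]
  show "corner i - Poly_Mapping.single s 1 \<preceq> A"
    unfolding pw_le_def
  proof
    fix t
    show "lookup (corner i - Poly_Mapping.single s 1) t \<le> lookup A t"
      using i q_s q_b_I[of t] b_pos_I[OF i] lookup_A_B_outside[of t] s_notin_I
      by (cases t rule: index_cases; cases "t = i")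
        (auto simp: lookup_minus_single lookup_corner lookup_A_I lookup_A_s)
  qed
  show "lookup (corner i - Poly_Mapping.single s 1) s + q * b s \<le> a s"
    using q_s by (simp add: lookup_minus_single lookup_corner)
  obtain k where k: "k \<in> I" "k \<noteq> i"
    using other_in_I by blast
  then show "\<exists>k\<in>I. lookup (corner i - Poly_Mapping.single s 1) k < (q + 1) * b k"
    using s_notin_I b_pos_I[OF k(1)]
    by (intro bexI[of _ k]) (auto simp: lookup_minus_single lookup_corner)
qed

lemma lookup_Ann_corner_minus_same:
  assumes h: "h \<in> Ann n (mon A - mon B)" and i: "i \<in> I"
  shows "lookup h (corner i - Poly_Mapping.single i 1) = 0"
proof (rule lookup_Ann_eq_0_below_b_s[OF h])
  note lookup_corner = lookup_corner_same[OF i] lookup_corner_I[OF i] lookup_corner_s[OF i]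
    lookup_corner_outside[OF i]
  show "corner i - Poly_Mapping.single i 1 \<preceq> B"
    unfolding pw_le_def
  proof
    fix t
    show "lookup (corner i - Poly_Mapping.single i 1) t \<le> lookup B t"
      using i q_b_I[of t] a_s_mod s_notin_I lookup_A_B_outside[of t]
      by (cases t rule: index_cases; cases "t = i")
        (auto simp: lookup_minus_single lookup_corner lookup_B_I lookup_B_s)
  qed
  show "lookup (corner i - Poly_Mapping.single i 1) s < b s"
    using i s_notin_I a_s_mod by (auto simp: lookup_minus_single lookup_corner)
qed

lemma lookup_Ann_corner_minus_other:
  assumes h: "h \<in> Ann n (mon A - mon B)" and i: "i \<in> I" and j: "j \<in> I" "j \<noteq> i" and q: "1 \<le> q"
  shows "lookup h (corner i - Poly_Mapping.single j 1) = 0"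
proof (rule lookup_Ann_eq_0_by_shifting[OF h, of _ "q - 1"])
  note lookup_corner = lookup_corner_same[OF i] lookup_corner_I[OF i] lookup_corner_s[OF i]
    lookup_corner_outside[OF i]
  have "(q - 1) * b s + b s = q * b s" "1 \<le> q * b s"
    using q b_pos_s mult_le_mono[of 1 q 1 "b s"] by (cases q; simp)+
  then have q_s: "a s + 1 - q * b s \<le> a s" "a s + 1 - q * b s + (q - 1) * b s \<le> a s"
    using q_b_s b_pos_s by linarith+
  show "corner i - Poly_Mapping.single j 1 \<preceq> A"
    unfolding pw_le_def
  proof
    fix t
    show "lookup (corner i - Poly_Mapping.single j 1) t \<le> lookup A t"
      using i j q_s q_b_I[of t] b_pos_I[OF i] lookup_A_B_outside[of t] s_notin_I
      by (cases t rule: index_cases; cases "t = i")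
        (auto simp: lookup_minus_single lookup_corner lookup_A_I lookup_A_s)
  qed
  show "lookup (corner i - Poly_Mapping.single j 1) s + (q - 1) * b s \<le> a s"
    using j q_s s_notin_I by (auto simp: lookup_minus_single lookup_corner)
  show "\<exists>k\<in>I. lookup (corner i - Poly_Mapping.single j 1) k < (q - 1 + 1) * b k"
    using j q b_pos_I[OF j(1)] by (intro bexI[of _ j]) (auto simp: lookup_minus_single lookup_corner)
qed

lemma Ann_corner_corner:
  assumes i: "i \<in> I"
  shows "Ann_corner n (mon A - mon B) (corner i)"
  unfolding Ann_corner_def
proof (intro ballI allI impI)
  fix h j
  assume h: "h \<in> Ann n (mon A - mon B)" and j: "1 \<le> lookup (corner i) j"
  have "j \<in> {1..n}"
    using j lookup_corner_outside[OF i, of j] by (metis not_one_le_zero)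
  then consider "j = s" | "j = i" | "j \<in> I" "j \<noteq> i"
    by (cases j rule: index_cases) auto
  then show "lookup h (corner i - Poly_Mapping.single j 1) = 0"
  proof cases
    case 1
    then have "q * b s \<le> a s"
      using j by (simp add: lookup_corner_s[OF i])
    then show ?thesis
      using 1 lookup_Ann_corner_minus_s[OF h i] by simp
  next
    case 2
    then show ?thesis
      using lookup_Ann_corner_minus_same[OF h i] by simp
  next
    case 3
    then have "1 \<le> q"
      using j i by (cases q) (auto simp: lookup_corner_I)
    then show ?thesis
      using lookup_Ann_corner_minus_other[OF h i 3] by simp
  qed
qed

definition gen_exp :: "nat + nat \<Rightarrow> nat \<Rightarrow>\<^sub>0 nat" where
  "gen_exp = case_sum (\<lambda>k. Poly_Mapping.single k (a k + b k + 1)) corner"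

definition gen :: "nat + nat \<Rightarrow> 'k::comm_ring_1 mpoly" where
  "gen = case_sum (\<lambda>k. mon (Poly_Mapping.single k (a k + b k + 1))) witness"

lemma gen_in_Ann: "k \<in> Inl ` I \<union> Inr ` I \<Longrightarrow> gen k \<in> Ann n (mon A - mon B :: 'k::comm_ring_1 mpoly)"
  using xpow_in_Ann witness_in_Ann by (auto simp: gen_def xpow_def)

lemma Ann_corner_gen_exp: "k \<in> Inl ` I \<union> Inr ` I \<Longrightarrow> Ann_corner n (mon A - mon B :: 'k::comm_ring_1 mpoly) (gen_exp k)"
  using Ann_corner_xpow Ann_corner_corner by (auto simp: gen_exp_def)

lemma lookup_gen_gen_exp:
  assumes k: "k \<in> Inl ` I \<union> Inr ` I" and l: "l \<in> Inl ` I \<union> Inr ` I"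
  shows "lookup (gen k :: 'k::comm_ring_1 mpoly) (gen_exp l) = (if k = l then 1 else 0)"
proof (cases k)
  case (Inl x)
  have "gen_exp l = Poly_Mapping.single x (a x + b x + 1) \<longleftrightarrow> l = Inl x"
    using l single_notin_chain[OF _ order.refl, THEN not_sym]
    by (auto simp: gen_exp_def corner_def single_eq_single_iff)
  then show ?thesis
    using Inl by (auto simp: gen_def lookup_mon)
next
  case (Inr i)
  then have i: "i \<in> I"
    using k by auto
  have "gen_exp l \<in> chain_exp (excess i) i ` {0..q} \<longleftrightarrow> l = Inr i"
  proof (cases l)
    case Inl
    then show ?thesis
      using single_notin_chain[OF i] by (auto simp: gen_exp_def)
  next
    case (Inr i')
    then have "i' \<in> I"
      using l by auto
    then show ?thesis
      using Inr corner_in_chain corner_notin_other_chain[OF i] by (cases "i' = i") (auto simp: gen_exp_def)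
  qed
  then show ?thesis
    using Inr i by (auto simp: gen_def lookup_witness)
qed

lemma not_is_CI: "\<not> is_CI n (mon A - mon B :: 'k::field mpoly)"
proof (rule not_is_CI_if_dual_family[of "Inl ` I \<union> Inr ` I" n gen _ gen_exp])
  have "card (Inl ` I \<union> Inr ` I) = card (Inl ` I :: (nat + nat) set) + card (Inr ` I :: (nat + nat) set)"
    using finite_I by (intro card_Un_disjoint) auto
  also have "\<dots> = 2 * (n - 1)"
    using card_I by (simp add: card_image)
  finally show "n < card (Inl ` I \<union> Inr ` I)"
    using n3 by simp
  show "finite (Inl ` I \<union> Inr ` I)"
    using finite_I by simp
  show "gen k \<in> Ann n (mon A - mon B :: 'k mpoly)" "Ann_corner n (mon A - mon B :: 'k mpoly) (gen_exp k)"
    if "k \<in> Inl ` I \<union> Inr ` I" for k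
    using that by (rule gen_in_Ann, rule Ann_corner_gen_exp)
  show "lookup (gen k :: 'k mpoly) (gen_exp l) = (if k = l then 1 else 0)"
    if "k \<in> Inl ` I \<union> Inr ` I" "l \<in> Inl ` I \<union> Inr ` I" for k l
    using that by (rule lookup_gen_gen_exp)
qed

end

context pure_power_binom
begin

lemma is_CI_iff: "is_CI n (mon A - mon B :: 'k::field mpoly) \<longleftrightarrow> (\<exists>i\<in>I. a i < ((a s + 1) div b s) * b i)"
proof
  assume CI: "is_CI n (mon A - mon B :: 'k mpoly)"
  show "\<exists>i\<in>I. a i < ((a s + 1) div b s) * b i"
  proof (rule ccontr)
    assume "\<not> (\<exists>i\<in>I. a i < ((a s + 1) div b s) * b i)"
    then interpret pure_power_binom_nonCI n s I a b
      by unfold_locales (auto simp: not_less)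
    show False
      using not_is_CI CI by blast
  qed
next
  assume "\<exists>i\<in>I. a i < ((a s + 1) div b s) * b i"
  then have "Ann n (mon A - mon B :: 'k mpoly) = ideal_gen n (map (\<lambda>i. xpow i (a i + b i + 1)) (sorted_list_of_set I) @
      [xpow s (a s + 1) + (\<Sum>j=1..Min {a i div b i | i. i \<in> I} + 1.
          (\<Prod>i\<in>I. xpow i (b i)) ^ j * xpow s (a s + 1 - j * b s))])"
    using finite_I by (intro Ann_eq_ideal_gen) auto
  then show "is_CI n (mon A - mon B :: 'k mpoly)"
    using card_I n3 finite_I by (intro is_CI_if_Ann_eq_ideal_gen) auto
qed

end

section \<open>Both sides in at least two variables\<close>

text \<open>For \<open>2 \<le> r \<le> n - 2\<close> the \<open>n\<close> pure powers \<open>x_k^(a_k + b_k + 1)\<close> and \<open>x_1^(a_1 + 1) x_n^(a_n + 1)\<close>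
  are \<open>n + 1\<close> minimal generators, because both sides of the binomial involve at least two
  variables.\<close>

locale middle_binom =
  fixes n r :: nat and a b :: "nat \<Rightarrow> nat"
  assumes r: "2 \<le> r" "r + 2 \<le> n" and b_pos: "\<And>i. i \<in> {1..n} \<Longrightarrow> 1 \<le> b i"
begin

definition A :: "nat \<Rightarrow>\<^sub>0 nat" where "A = expv {1..n} a + expv {1..r} b"

definition B :: "nat \<Rightarrow>\<^sub>0 nat" where "B = expv {1..n} a + expv {r+1..n} b"

definition mixed :: "nat \<Rightarrow>\<^sub>0 nat" where
  "mixed = Poly_Mapping.single 1 (a 1 + 1) + Poly_Mapping.single n (a n + 1)"

lemma binomF_eq: "binomF n r a b = mon A - mon B"
  by (simp add: binomF_def A_def B_def)

lemma lookup_A: "lookup A x = (if x \<in> {1..n} then a x else 0) + (if x \<in> {1..r} then b x else 0)"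
  and lookup_B: "lookup B x = (if x \<in> {1..n} then a x else 0) + (if x \<in> {r+1..n} then b x else 0)"
  by (simp_all add: A_def B_def lookup_add lookup_expv)

lemma lookup_mixed: "lookup mixed x = (if x = 1 then a 1 + 1 else if x = n then a n + 1 else 0)"
  using r by (simp add: mixed_def lookup_add lookup_single when_def)

lemma mixed_ne_single: "mixed \<noteq> Poly_Mapping.single k v"
proof
  assume eq: "mixed = Poly_Mapping.single k v"
  have "lookup (Poly_Mapping.single k v) 1 \<noteq> 0" "lookup (Poly_Mapping.single k v) n \<noteq> 0"
    using r lookup_mixed[of 1] lookup_mixed[of n] unfolding eq by simp_all
  then show False
    using r by (simp add: lookup_single when_def split: if_splits)
qed

lemma mon_single_in_Ann:
  assumes x: "x \<in> {1..n}"
  shows "mon (Poly_Mapping.single x (a x + b x + 1)) \<in> Ann n (mon A - mon B :: 'k::comm_ring_1 mpoly)"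
proof (rule mon_in_Ann_binom)
  show "keys (Poly_Mapping.single x (a x + b x + 1)) \<subseteq> {1..n}"
    using x by simp
  have "lookup A x < a x + b x + 1" "lookup B x < a x + b x + 1"
    using x by (simp_all add: lookup_A lookup_B)
  then show "\<not> Poly_Mapping.single x (a x + b x + 1) \<preceq> A" "\<not> Poly_Mapping.single x (a x + b x + 1) \<preceq> B"
    unfolding pw_le_def by (metis lookup_single_eq not_le)+
qed

lemma mon_mixed_in_Ann: "mon mixed \<in> Ann n (mon A - mon B :: 'k::comm_ring_1 mpoly)"
proof (rule mon_in_Ann_binom)
  show "keys mixed \<subseteq> {1..n}"
    using r by (auto simp: in_keys_iff lookup_mixed split: if_splits)
  have "lookup A n < lookup mixed n" "lookup B 1 < lookup mixed 1"
    using r by (simp_all add: lookup_mixed lookup_A lookup_B)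
  then show "\<not> mixed \<preceq> A" "\<not> mixed \<preceq> B"
    unfolding pw_le_def by (meson not_le)+
qed

lemma Ann_corner_single:
  assumes x: "x \<in> {1..n}"
  shows "Ann_corner n (mon A - mon B) (Poly_Mapping.single x (a x + b x + 1))"
proof (rule Ann_corner_binom)
  fix j
  assume "1 \<le> lookup (Poly_Mapping.single x (a x + b x + 1)) j"
  then have "j = x"
    by (auto simp: lookup_single when_def split: if_splits)
  then have \<mu>: "Poly_Mapping.single x (a x + b x + 1) - Poly_Mapping.single j 1 = Poly_Mapping.single x (a x + b x)"
    by (simp flip: single_diff)
  have "Poly_Mapping.single x (a x + b x) \<preceq> A \<and> \<not> A - Poly_Mapping.single x (a x + b x) \<preceq> B"
    if "x \<le> r"
  proof -
    define y where "y = (if x = 1 then 2 else 1 :: nat)"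
    have "y \<in> {1..r}" "y \<noteq> x" "1 \<le> b y"
      using r b_pos[of y] by (auto simp: y_def)
    then show ?thesis
      using x that unfolding pw_le_def
      by (auto simp: lookup_minus lookup_single when_def lookup_A lookup_B intro!: exI[of _ y])
  qed
  moreover have "Poly_Mapping.single x (a x + b x) \<preceq> B \<and> \<not> B - Poly_Mapping.single x (a x + b x) \<preceq> A"
    if "r < x"
  proof -
    define y where "y = (if x = n then n - 1 else n)"
    have "y \<in> {r+1..n}" "y \<noteq> x" "1 \<le> b y"
      using r x that b_pos[of y] by (auto simp: y_def)
    then show ?thesis
      using x that unfolding pw_le_def
      by (auto simp: lookup_minus lookup_single when_def lookup_A lookup_B intro!: exI[of _ y])
  qed
  ultimately show "let \<mu> = Poly_Mapping.single x (a x + b x + 1) - Poly_Mapping.single j 1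
      in \<mu> \<preceq> A \<and> \<not> A - \<mu> \<preceq> B \<or> \<mu> \<preceq> B \<and> \<not> B - \<mu> \<preceq> A"
    unfolding \<mu> Let_def by (meson not_less)
qed

lemma Ann_corner_mixed: "Ann_corner n (mon A - mon B) mixed"
proof (rule Ann_corner_binom)
  fix j
  assume "1 \<le> lookup mixed j"
  then have j: "j = 1 \<or> j = n"
    by (auto simp: lookup_mixed split: if_splits)
  define \<mu> where "\<mu> = mixed - Poly_Mapping.single j 1"
  have lookup_\<mu>: "lookup \<mu> x =
      (if x = 1 then a 1 + 1 - (if j = 1 then 1 else 0) else if x = n then a n + 1 - (if j = n then 1 else 0) else 0)" for x
    using r by (auto simp: \<mu>_def lookup_minus lookup_mixed lookup_single)
  have b: "1 \<le> b 1" "1 \<le> b 2" "1 \<le> b (n - 1)" "1 \<le> b n"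
    using r b_pos by auto
  have "\<mu> \<preceq> B \<and> \<not> B - \<mu> \<preceq> A" if "j = 1"
    using r b that unfolding pw_le_def
    by (auto simp: lookup_minus lookup_\<mu> lookup_A lookup_B intro!: exI[of _ "n - 1"])
  moreover have "\<mu> \<preceq> A \<and> \<not> A - \<mu> \<preceq> B" if "j = n"
    using r b that unfolding pw_le_def
    by (auto simp: lookup_minus lookup_\<mu> lookup_A lookup_B intro!: exI[of _ 2])
  ultimately show "let \<mu> = mixed - Poly_Mapping.single j 1 in \<mu> \<preceq> A \<and> \<not> A - \<mu> \<preceq> B \<or> \<mu> \<preceq> B \<and> \<not> B - \<mu> \<preceq> A"
    using j unfolding \<mu>_def Let_def by blast
qed

lemma not_is_CI: "\<not> is_CI n (binomF n r a b :: 'k::field mpoly)"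
proof -
  define W where "W = insert None (Some ` {1..n})"
  define p where "p = case_option mixed (\<lambda>k. Poly_Mapping.single k (a k + b k + 1))"
  have "inj_on p W"
    using mixed_ne_single mixed_ne_single[THEN not_sym]
    by (auto simp: W_def p_def inj_on_def single_eq_single_iff)
  then have "lookup (mon (p k)) (p l) = (if k = l then 1 else 0 :: 'k)" if "k \<in> W" "l \<in> W" for k l
    using that by (auto simp: lookup_mon inj_on_eq_iff)
  moreover have "mon (p k) \<in> Ann n (mon A - mon B :: 'k mpoly) \<and> Ann_corner n (mon A - mon B :: 'k mpoly) (p k)"
    if "k \<in> W" for k
  proof (cases k)
    case None
    then show ?thesis
      by (simp add: p_def mon_mixed_in_Ann Ann_corner_mixed)
  next
    case (Some x)
    then have "x \<in> {1..n}"
      using that by (auto simp: W_def)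
    moreover have "p k = Poly_Mapping.single x (a x + b x + 1)"
      using Some by (simp add: p_def)
    ultimately show ?thesis
      by (simp only:) (intro conjI mon_single_in_Ann Ann_corner_single)
  qed
  moreover have "n < card W"
    by (simp add: W_def card_image)
  ultimately show ?thesis
    unfolding binomF_eq by (intro not_is_CI_if_dual_family[of W n "\<lambda>k. mon (p k)" _ p]) (auto simp: W_def)
qed

end

lemma is_CI_binomF_iff:
  fixes a b :: "nat \<Rightarrow> nat"
  assumes n3: "3 \<le> n" and r: "1 \<le> r" "r \<le> n - 1" and b_pos: "\<And>i. i \<in> {1..n} \<Longrightarrow> 1 \<le> b i"
  shows "is_CI n (binomF n r a b :: 'k::field mpoly) \<longleftrightarrow>
      (r = n - 1 \<and> (\<exists>i\<in>{1..n-1}. a i < ((a n + 1) div b n) * b i)) \<or>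
      (r = 1 \<and> (\<exists>i\<in>{2..n}. a i < ((a 1 + 1) div b 1) * b i))"
proof -
  consider "r = n - 1" | "r = 1" | "2 \<le> r" "r + 2 \<le> n"
    using r by linarith
  then show ?thesis
  proof cases
    case 1
    interpret pure_power_binom n n "{1..n - 1}" a b
      using n3 b_pos by unfold_locales auto
    have "binomF n r a b = (mon A - mon B :: 'k mpoly)"
      using 1 by (simp only: binomF_eq_if_last)
    then show ?thesis
      using 1 n3 is_CI_iff[where 'k = 'k] by auto
  next
    case 2
    interpret pure_power_binom n 1 "{2..n}" a b
      using n3 b_pos by unfold_locales auto
    have "is_CI n (binomF n r a b :: 'k mpoly) \<longleftrightarrow> is_CI n (mon A - mon B :: 'k mpoly)"
      unfolding 2 binomF_eq_if_first[OF refl] is_CI_uminus ..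
    then show ?thesis
      using 2 n3 is_CI_iff[where 'k = 'k] by auto
  next
    case 3
    interpret middle_binom n r a b
      using 3 b_pos by unfold_locales auto
    show ?thesis
      using not_is_CI 3 n3 by auto
  qed
qed

theorem theorem3p3:
  fixes a b :: "nat \<Rightarrow> nat" and n r :: nat
  assumes K: "alg_closed TYPE('k::field_char_0)"
    and n3: "n \<ge> 3"
    and r: "1 \<le> r" "r \<le> n - 1"
    and b1: "\<forall>i\<in>{1..n}. b i \<ge> 1"
    and bal: "(\<Sum>i=1..r. b i) = (\<Sum>j=r+1..n. b j)" "(\<Sum>i=1..r. b i) > 0"
  shows "(is_CI n (binomF n r a b :: 'k mpoly) \<longleftrightarrow>
           ((r = n - 1 \<and> (\<exists>i\<in>{1..n-1}. a i < ((a n + 1) div b n) * b i)) \<or>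
            (r = 1 \<and> (\<exists>i\<in>{2..n}. a i < ((a 1 + 1) div b 1) * b i))))
       \<and> (r = n - 1 \<and> (\<exists>i\<in>{1..n-1}. a i < ((a n + 1) div b n) * b i) \<longrightarrow>
         Ann n (binomF n r a b :: 'k mpoly) =
           ideal_gen n
             (map (\<lambda>i. xpow i (a i + b i + 1)) [1..<n] @
              [xpow n (a n + 1) +
               (\<Sum>j=1..Min {a i div b i | i. i \<in> {1..n-1}} + 1.
                  (\<Prod>i=1..n-1. xpow i (b i)) ^ j * xpow n (a n + 1 - j * b n))]))"
proof -
  interpret pure_power_binom n n "{1..n - 1}" a b
    using n3 b1 by unfold_locales auto
  have "binomF n (n - 1) a b = (mon A - mon B :: 'k mpoly)"
    by (simp only: binomF_eq_if_last)
  moreover have "set [1..<n] = {1..n - 1}"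
    using n3 by auto
  ultimately show ?thesis
    using is_CI_binomF_iff[of n r b a] n3 r b1 Ann_eq_ideal_gen[where 'k = 'k] by auto
qed

end
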